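(* Let $n<7$, $n\ge2$ be a fixed real number, let $m=(n+3)/2$, let $\nu_1,\nu_2\ge0$ and $T>0$. Let $u_1,\omega_1,\psi_1:[0,T)\times[0,\infty)\times\mathbb{R}\to\mathbb{R}$ be smooth functions which, for each $t$, are even in $r$ (extend to smooth functions on $\mathbb{R}^2$ even in $r$) and which, with all their derivatives, decay rapidly as $r^2+z^2\to\infty$, uniformly on compact time subintervals. Suppose that on $(0,T)\times(0,\infty)\times\mathbb{R}$ $$u_{1,t}+u^ru_{1,r}+u^zu_{1,z}=2u_1\psi_{1,z}+\nu_1\Delta_nu_1,$$ $$\omega_{1,t}+u^r\omega_{1,r}+u^z\omega_{1,z}=(u_1^2)_z+\nu_2\Delta_n\omega_1,$$ $$-\Delta_n\psi_1=\omega_1,$$ where $\Delta_n=\partial_r^2+\frac nr\partial_r+\partial_z^2$, $u^r=-r\psi_{1,z}$ and $u^z=(m-1)\psi_1+r\psi_{1,r}$. Then for all $t\in(0,T)$, $$\frac12\frac{d}{dt}\int_{\mathbb{R}}\int_0^\infty\Big(u_1^2+\frac{7-n}{4}\big(\psi_{1,r}^2+\psi_{1,z}^2\big)\Big)r^n\,dr\,dz=-\nu_1\int_{\mathbb{R}}\int_0^\infty\big(u_{1,r}^2+u_{1,z}^2\big)r^n\,dr\,dz-\nu_2\,\frac{7-n}{4}\int_{\mathbb{R}}\int_0^\infty(\Delta_n\psi_1)^2\,r^n\,dr\,dz .$$ In particular the (nonnegative) generalized energy $\int\!\!\int\big(u_1^2+\frac{7-n}{4}|\nabla\psi_1|^2\big)r^n\,dr\,dz$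 is non-increasing in time, and conserved when $\nu_1=\nu_2=0$.
   Context: This is the "generalized axisymmetric Boussinesq system": the density $\Gamma=r^2u_1$ satisfies $\Gamma_t+u^r\Gamma_r+u^z\Gamma_z=\nu_1(\Gamma_{rr}+\frac{n-4}{r}\Gamma_r+\frac{6-2n}{r^2}\Gamma+\Gamma_{zz})$ (equivalent to the stated $u_1$ equation), the source term in the $\omega_1$ equation is $(\Gamma^2/r^4)_z=(u_1^2)_z$, and the term $-(n-3)\psi_{1,z}\omega_1$ of the generalized Navier--Stokes equations is removed. The velocity is $u^r=-(r^{m-1}\psi_1)_z/r^{m-2}$, $u^z=(r^{m-1}\psi_1)_r/r^{m-2}$ with $m=(n+3)/2$, which satisfies $(r^{m-2}u^r)_r+(r^{m-2}u^z)_z=0$. Here $\nabla=(\partial_r,\partial_z)$. *)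

theory Defs
  imports "HOL-Analysis.Analysis"
begin

definition pd :: "'a::euclidean_space \<Rightarrow> ('a \<Rightarrow> real) \<Rightarrow> 'a \<Rightarrow> real" where
  "pd v g x = deriv (\<lambda>h. g (x + h *\<^sub>R v)) 0"

fun iter_pd :: "'a::euclidean_space list \<Rightarrow> ('a \<Rightarrow> real) \<Rightarrow> 'a \<Rightarrow> real" where
  "iter_pd [] f = f"
| "iter_pd (v # vs) f = pd v (iter_pd vs f)"

definition smooth_on :: "'a::euclidean_space set \<Rightarrow> ('a \<Rightarrow> real) \<Rightarrow> bool" where
  "smooth_on S f \<longleftrightarrow>
     (\<forall>vs. set vs \<subseteq> Basis \<longrightarrow>
        continuous_on S (iter_pd vs f) \<and>
        (\<forall>v\<in>Basis. \<forall>x\<in>S.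
            ((\<lambda>h. iter_pd vs f (x + h *\<^sub>R v)) has_real_derivative iter_pd (v # vs) f x) (at 0)))"

definition rapid_decay :: "real \<Rightarrow> (real \<times> real \<times> real \<Rightarrow> real) \<Rightarrow> bool" where
  "rapid_decay T f \<longleftrightarrow>
     (\<forall>a b (vs :: (real \<times> real \<times> real) list) (k::nat).
        0 < a \<and> a \<le> b \<and> b < T \<and> set vs \<subseteq> Basis \<longrightarrow>
        (\<exists>C. \<forall>t\<in>{a..b}. \<forall>r z. (1 + r\<^sup>2 + z\<^sup>2) ^ k * \<bar>iter_pd vs f (t, r, z)\<bar> \<le> C))"

definition dt :: "(real \<Rightarrow> real \<Rightarrow> real \<Rightarrow> real) \<Rightarrow> real \<Rightarrow> real \<Rightarrow> real \<Rightarrow> real" where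
  "dt f t r z = deriv (\<lambda>s. f s r z) t"
definition dr :: "(real \<Rightarrow> real \<Rightarrow> real \<Rightarrow> real) \<Rightarrow> real \<Rightarrow> real \<Rightarrow> real \<Rightarrow> real" where
  "dr f t r z = deriv (\<lambda>s. f t s z) r"
definition dz :: "(real \<Rightarrow> real \<Rightarrow> real \<Rightarrow> real) \<Rightarrow> real \<Rightarrow> real \<Rightarrow> real \<Rightarrow> real" where
  "dz f t r z = deriv (\<lambda>s. f t r s) z"

definition lap_n :: "real \<Rightarrow> (real \<Rightarrow> real \<Rightarrow> real \<Rightarrow> real) \<Rightarrow> real \<Rightarrow> real \<Rightarrow> real \<Rightarrow> real" where
  "lap_n n f t r z = dr (dr f) t r z + n / r * dr f t r z + dz (dz f) t r z"

definition gen_energy :: "real \<Rightarrow> (real \<Rightarrow> real \<Rightarrow> real \<Rightarrow> real) \<Rightarrow> (real \<Rightarrow> real \<Rightarrow> real \<Rightarrow> real) \<Rightarrow> real \<Rightarrow> real" where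
  "gen_energy n u1 psi1 t =
     (LINT z|lborel. (LINT r:{0<..}|lborel.
        ((u1 t r z)\<^sup>2 + (7 - n) / 4 * ((dr psi1 t r z)\<^sup>2 + (dz psi1 t r z)\<^sup>2)) * r powr n))"

end

theory Submission
  imports Defs "HOL-Probability.Sinc_Integral"
begin

text \<open>Multiply the u_1-equation by u_1 r^n and the \<omega>_1-equation by \<psi>_1 r^n and integrate over the
  half-plane r > 0. Transport by the velocity u = (-r \<psi>_{1,z}, (m - 1) \<psi>_1 + r \<psi>_{1,r}) is
  antisymmetric up to its weighted divergence -(n + 1)/2 r^n \<psi>_{1,z}; on the u_1 side this leaves
  (n + 1)/4 \<integral>u_1^2 \<psi>_{1,z} r^n, which together with the stretching term 2 u_1 \<psi>_{1,z} gives
  (7 - n)/4 \<integral>u_1^2 \<psi>_{1,z} r^n. On the \<psi>_1 side, two integrations by parts turn \<integral>\<psi>_1 \<omega>_{1,t} r^n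
  into \<integral>\<nabla>\<psi>_1 \<cdot> \<nabla>\<psi>_{1,t} r^n, the transport term vanishes because u \<cdot> \<nabla>\<psi>_1 = (m - 1) \<psi>_1 \<psi>_{1,z}, and
  the source (u_1^2)_z yields -\<integral>u_1^2 \<psi>_{1,z} r^n. With the weight (7 - n)/4 on the second identity
  the cubic terms cancel and only the viscous terms remain.

  All boundary terms vanish: at r = 0 because of the factor r^n with n \<ge> 1, at infinity by rapid
  decay. Every integrand is dominated by a multiple of (1 + r^2)^-1 (1 + z^2)^-1, which justifies
  Fubini and differentiation under the integral sign.\<close>

lemma integrable_inverse_1_plus_square_lborel:
  "integrable lborel (\<lambda>x::real. inverse (1 + x\<^sup>2))"
  using integrable_inverse_1_plus_square by (simp add: set_integrable_def)

lemma integral_Ioi_deriv_eq_0: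
  fixes A A' :: "real \<Rightarrow> real"
  assumes "\<And>r. 0 < r \<Longrightarrow> (A has_real_derivative A' r) (at r)"
    and "\<And>r. 0 < r \<Longrightarrow> isCont A' r"
    and "set_integrable lborel {0<..} A'"
    and "(A \<longlongrightarrow> 0) (at_right 0)" and "(A \<longlongrightarrow> 0) at_top"
  shows "(LINT r:{0<..}|lborel. A' r) = 0"
proof -
  have "(LBINT x=ereal 0..\<infinity>. A' x) = 0 - 0"
  proof (rule interval_integral_FTC_integrable[where F=A])
    show "set_integrable lborel (einterval (ereal 0) \<infinity>) A'" using assms(3) by simp
    show "((A \<circ> real_of_ereal) \<longlongrightarrow> 0) (at_right (ereal 0))"
      using assms(4) by (simp add: ereal_tendsto_simps)
    show "((A \<circ> real_of_ereal) \<longlongrightarrow> 0) (at_left \<infinity>)"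
      using assms(5) by (simp add: ereal_tendsto_simps)
  qed (use assms(1,2) in \<open>auto simp: has_real_derivative_iff_has_vector_derivative[symmetric]\<close>)
  then show ?thesis by (simp add: interval_lebesgue_integral_def)
qed

lemma integral_deriv_eq_0:
  fixes B B' :: "real \<Rightarrow> real"
  assumes "\<And>z. (B has_real_derivative B' z) (at z)"
    and "\<And>z. isCont B' z"
    and "integrable lborel B'"
    and "(B \<longlongrightarrow> 0) at_bot" and "(B \<longlongrightarrow> 0) at_top"
  shows "(LINT z|lborel. B' z) = 0"
proof -
  have "(LBINT x=-\<infinity>..\<infinity>. B' x) = 0 - 0"
  proof (rule interval_integral_FTC_integrable[where F=B])
    show "set_integrable lborel (einterval (-\<infinity>) \<infinity>) B'"
      using assms(3) by (simp add: set_integrable_def)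
    show "((B \<circ> real_of_ereal) \<longlongrightarrow> 0) (at_right (-\<infinity>))"
      using assms(4) by (simp add: ereal_tendsto_simps)
    show "((B \<circ> real_of_ereal) \<longlongrightarrow> 0) (at_left \<infinity>)"
      using assms(5) by (simp add: ereal_tendsto_simps)
  qed (use assms(1,2) in \<open>auto simp: has_real_derivative_iff_has_vector_derivative[symmetric]\<close>)
  then show ?thesis by (simp add: interval_lebesgue_integral_def set_lebesgue_integral_def)
qed

lemma has_real_derivative_integral:
  fixes f f' :: "real \<Rightarrow> 'a \<Rightarrow> real" and h :: "'a \<Rightarrow> real"
  assumes t0: "a < t0" "t0 < b"
    and int: "\<And>\<tau>. a < \<tau> \<Longrightarrow> \<tau> < b \<Longrightarrow> integrable M (f \<tau>)"
    and der: "\<And>\<tau> x. a < \<tau> \<Longrightarrow> \<tau> < b \<Longrightarrow> x \<in> space M \<Longrightarrow>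
                ((\<lambda>s. f s x) has_real_derivative f' \<tau> x) (at \<tau>)"
    and meas: "f' t0 \<in> borel_measurable M"
    and h: "integrable M h"
    and bound: "\<And>\<tau> x. a < \<tau> \<Longrightarrow> \<tau> < b \<Longrightarrow> x \<in> space M \<Longrightarrow> \<bar>f' \<tau> x\<bar> \<le> h x"
  shows "((\<lambda>\<tau>. integral\<^sup>L M (f \<tau>)) has_real_derivative integral\<^sup>L M (f' t0)) (at t0)"
  unfolding has_field_derivative_iff tendsto_at_iff_sequentially
proof (intro allI impI)
  fix X :: "nat \<Rightarrow> real"
  assume X: "\<forall>i. X i \<in> UNIV - {t0}" and lim: "X \<longlonglongrightarrow> t0"
  define q where "q i x = (if a < X i \<and> X i < b then (f (X i) x - f t0 x) / (X i - t0) else 0)" for i x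
  have ev: "\<forall>\<^sub>F i in sequentially. a < X i \<and> X i < b"
    using topological_tendstoD[OF lim, of "{a<..<b}"] t0 by simp
  have q_eq: "q i = (\<lambda>x. (f (X i) x - f t0 x) / (X i - t0))" if "a < X i \<and> X i < b" for i
    using that by (simp add: q_def fun_eq_iff)
  have q_meas: "q i \<in> borel_measurable M" for i
  proof (cases "a < X i \<and> X i < b")
    case True
    then have "f (X i) \<in> borel_measurable M" "f t0 \<in> borel_measurable M"
      using int t0 by (auto intro: borel_measurable_integrable)
    then show ?thesis unfolding q_eq[OF True] by measurable
  next
    case False
    then show ?thesis unfolding q_def if_not_P[OF False] by simp
  qed
  \<comment> \<open>Mean value theorem: the difference quotients are dominated by h.\<close>
  have q_bound: "AE x in M. norm (q i x) \<le> h x" for i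
  proof (intro AE_I2)
    fix x assume x: "x \<in> space M"
    have h0: "0 \<le> h x" using bound[OF t0 x] by (meson abs_ge_zero order_trans)
    show "norm (q i x) \<le> h x"
    proof (cases "a < X i \<and> X i < b")
      case True
      have "\<bar>f (X i) x - f t0 x\<bar> \<le> h x * \<bar>X i - t0\<bar>"
        using field_differentiable_bound[of "{a<..<b}" "\<lambda>s. f s x" "\<lambda>s. f' s x" "h x" "X i" t0]
        by (auto intro: has_field_derivative_at_within der x bound simp: True t0)
      then show ?thesis using True X by (simp add: q_def abs_divide pos_divide_le_eq)
    next
      case False
      show ?thesis unfolding q_def if_not_P[OF False] using h0 by simp
    qed
  qed
  have q_lim: "AE x in M. (\<lambda>i. q i x) \<longlonglongrightarrow> f' t0 x"
  proof (intro AE_I2)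
    fix x assume x: "x \<in> space M"
    have "((\<lambda>y. (f y x - f t0 x) / (y - t0)) \<longlongrightarrow> f' t0 x) (at t0)"
      using der[OF t0 x] by (simp add: has_field_derivative_iff)
    then have "((\<lambda>y. (f y x - f t0 x) / (y - t0)) \<circ> X) \<longlonglongrightarrow> f' t0 x"
      using X lim unfolding tendsto_at_iff_sequentially by blast
    then show "(\<lambda>i. q i x) \<longlonglongrightarrow> f' t0 x"
      by (rule Lim_transform_eventually) (use ev in \<open>auto elim!: eventually_mono simp: q_def\<close>)
  qed
  have "(\<lambda>i. integral\<^sup>L M (q i)) \<longlonglongrightarrow> integral\<^sup>L M (f' t0)"
    by (rule integral_dominated_convergence[OF meas q_meas h q_lim q_bound])
  moreover have "\<forall>\<^sub>F i in sequentially.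
      integral\<^sup>L M (q i) = ((\<lambda>y. (integral\<^sup>L M (f y) - integral\<^sup>L M (f t0)) / (y - t0)) \<circ> X) i"
    using ev by eventually_elim (use int t0 in \<open>simp add: q_eq\<close>)
  ultimately show "((\<lambda>y. (integral\<^sup>L M (f y) - integral\<^sup>L M (f t0)) / (y - t0)) \<circ> X)
      \<longlonglongrightarrow> integral\<^sup>L M (f' t0)"
    by (rule Lim_transform_eventually)
qed

lemma has_real_derivative_along_line:
  fixes F :: "'a::real_normed_vector \<Rightarrow> real"
  assumes "\<forall>q\<in>S. ((\<lambda>h. F (q + h *\<^sub>R v)) has_real_derivative F' q) (at 0)"
    and "a + x *\<^sub>R v \<in> S"
  shows "((\<lambda>s. F (a + s *\<^sub>R v)) has_real_derivative F' (a + x *\<^sub>R v)) (at x)"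
proof -
  have "((\<lambda>h. F (a + x *\<^sub>R v + h *\<^sub>R v)) has_real_derivative F' (a + x *\<^sub>R v)) (at 0)"
    using assms by blast
  then have "((\<lambda>s. F (a + (s + x) *\<^sub>R v)) has_real_derivative F' (a + x *\<^sub>R v)) (at 0)"
    by (simp add: scaleR_add_left algebra_simps)
  then show ?thesis using DERIV_shift[of "\<lambda>s. F (a + s *\<^sub>R v)" _ 0 x] by simp
qed

lemma second_difference_mvt:
  fixes G :: "'a::real_normed_vector \<Rightarrow> real"
  assumes Gv: "\<forall>q\<in>S. ((\<lambda>h. G (q + h *\<^sub>R v)) has_real_derivative Gv q) (at 0)"
    and Gvw: "\<forall>q\<in>S. ((\<lambda>h. Gv (q + h *\<^sub>R w)) has_real_derivative Gvw q) (at 0)"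
    and h: "0 < h"
    and square: "\<And>x y. 0 \<le> x \<Longrightarrow> x \<le> h \<Longrightarrow> 0 \<le> y \<Longrightarrow> y \<le> h \<Longrightarrow> p + x *\<^sub>R v + y *\<^sub>R w \<in> S"
  shows "\<exists>x y. 0 < x \<and> x < h \<and> 0 < y \<and> y < h \<and>
     G (p + h *\<^sub>R v + h *\<^sub>R w) - G (p + h *\<^sub>R v) - G (p + h *\<^sub>R w) + G p
       = h * h * Gvw (p + x *\<^sub>R v + y *\<^sub>R w)"
proof -
  define g where "g x = G (p + h *\<^sub>R w + x *\<^sub>R v) - G (p + x *\<^sub>R v)" for x
  have "DERIV g x :> Gv (p + h *\<^sub>R w + x *\<^sub>R v) - Gv (p + x *\<^sub>R v)" if "0 \<le> x" "x \<le> h" for x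
    unfolding g_def
  proof (intro DERIV_diff)
    show "((\<lambda>s. G (p + h *\<^sub>R w + s *\<^sub>R v)) has_real_derivative Gv (p + h *\<^sub>R w + x *\<^sub>R v)) (at x)"
      by (rule has_real_derivative_along_line[OF Gv])
         (use square[of x h] that h in \<open>simp add: algebra_simps\<close>)
    show "((\<lambda>s. G (p + s *\<^sub>R v)) has_real_derivative Gv (p + x *\<^sub>R v)) (at x)"
      by (rule has_real_derivative_along_line[OF Gv])
         (use square[of x 0] that h in \<open>simp add: algebra_simps\<close>)
  qed
  from MVT2[OF h this] obtain x where x: "0 < x" "x < h"
    and gx: "g h - g 0 = (h - 0) * (Gv (p + h *\<^sub>R w + x *\<^sub>R v) - Gv (p + x *\<^sub>R v))" by blast
  define k where "k y = Gv (p + x *\<^sub>R v + y *\<^sub>R w)" for y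
  have "DERIV k y :> Gvw (p + x *\<^sub>R v + y *\<^sub>R w)" if "0 \<le> y" "y \<le> h" for y
    unfolding k_def by (rule has_real_derivative_along_line[OF Gvw]) (use square[of x y] that x in auto)
  from MVT2[OF h this] obtain y where y: "0 < y" "y < h"
    and ky: "k h - k 0 = (h - 0) * Gvw (p + x *\<^sub>R v + y *\<^sub>R w)" by blast
  have "G (p + h *\<^sub>R v + h *\<^sub>R w) - G (p + h *\<^sub>R v) - G (p + h *\<^sub>R w) + G p = g h - g 0"
    by (simp add: g_def algebra_simps)
  also have "\<dots> = h * (k h - k 0)" using gx by (simp add: k_def algebra_simps)
  also have "\<dots> = h * h * Gvw (p + x *\<^sub>R v + y *\<^sub>R w)" using ky by simp
  finally show ?thesis using x y by blast
qed

lemma dist_small_parallelogram: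
  fixes p v w :: "'a::real_normed_vector" and d :: real
  defines "h \<equiv> d / (2 * (norm v + norm w + 1))"
  assumes d: "0 < d" and xy: "0 \<le> x" "x \<le> h" "0 \<le> y" "y \<le> h"
  shows "dist (p + x *\<^sub>R v + y *\<^sub>R w) p < d"
proof -
  have h: "0 < h" using d by (simp add: h_def add_nonneg_pos)
  have "dist (p + x *\<^sub>R v + y *\<^sub>R w) p = norm (x *\<^sub>R v + y *\<^sub>R w)" by (simp add: dist_norm)
  also have "\<dots> \<le> x * norm v + y * norm w"
    using xy by (metis abs_of_nonneg norm_scaleR norm_triangle_ineq)
  also have "\<dots> \<le> h * norm v + h * norm w" using xy by (intro add_mono mult_right_mono) auto
  also have "\<dots> < h * (2 * (norm v + norm w + 1))"
  proof -
    have "h * (2 * (norm v + norm w + 1)) = 2 * (h * norm v) + 2 * (h * norm w) + 2 * h"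
      by (simp add: algebra_simps)
    moreover have "0 \<le> h * norm v" "0 \<le> h * norm w" using h by simp_all
    ultimately show ?thesis using h by linarith
  qed
  also have "\<dots> = d"
  proof -
    have "2 * norm v + 2 * norm w + 2 \<noteq> 0" using norm_ge_zero[of v] norm_ge_zero[of w] by linarith
    then show ?thesis by (simp add: h_def)
  qed
  finally show ?thesis .
qed

text \<open>The second difference over a small square is h^2 times either mixed derivative at an interior
  point, so continuity at the corner forces the two mixed derivatives to agree.\<close>
lemma second_partials_symmetric:
  fixes G :: "'a::real_normed_vector \<Rightarrow> real"
  assumes S: "open S" "p \<in> S"
    and Gv: "\<forall>q\<in>S. ((\<lambda>h. G (q + h *\<^sub>R v)) has_real_derivative Gv q) (at 0)"
    and Gw: "\<forall>q\<in>S. ((\<lambda>h. G (q + h *\<^sub>R w)) has_real_derivative Gw q) (at 0)"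
    and Gvw: "\<forall>q\<in>S. ((\<lambda>h. Gv (q + h *\<^sub>R w)) has_real_derivative Gvw q) (at 0)"
    and Gwv: "\<forall>q\<in>S. ((\<lambda>h. Gw (q + h *\<^sub>R v)) has_real_derivative Gwv q) (at 0)"
    and cont_vw: "continuous_on S Gvw" and cont_wv: "continuous_on S Gwv"
  shows "Gvw p = Gwv p"
proof (rule ccontr)
  assume ne: "Gvw p \<noteq> Gwv p"
  define e where "e = \<bar>Gvw p - Gwv p\<bar> / 2"
  have e: "0 < e" using ne by (simp add: e_def)
  obtain d0 where d0: "0 < d0" "ball p d0 \<subseteq> S" using S openE by blast
  obtain d1 where d1: "0 < d1" "\<forall>q\<in>S. dist q p < d1 \<longrightarrow> dist (Gvw q) (Gvw p) < e"
    using cont_vw S(2) e unfolding continuous_on_iff by blast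
  obtain d2 where d2: "0 < d2" "\<forall>q\<in>S. dist q p < d2 \<longrightarrow> dist (Gwv q) (Gwv p) < e"
    using cont_wv S(2) e unfolding continuous_on_iff by blast
  define d where "d = min d0 (min d1 d2)"
  have d: "0 < d" using d0 d1 d2 by (simp add: d_def)
  define h where "h = d / (2 * (norm v + norm w + 1))"
  have h: "0 < h" using d by (simp add: h_def add_nonneg_pos)
  have close: "dist (p + x *\<^sub>R v + y *\<^sub>R w) p < d" if "0 \<le> x" "x \<le> h" "0 \<le> y" "y \<le> h" for x y
    using dist_small_parallelogram[OF d, of x v w y p] that by (simp add: h_def)
  have square: "p + x *\<^sub>R v + y *\<^sub>R w \<in> S" if "0 \<le> x" "x \<le> h" "0 \<le> y" "y \<le> h" for x y
    using close[OF that] d0 by (auto simp: d_def dist_commute)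
  have square': "p + x *\<^sub>R w + y *\<^sub>R v \<in> S" if "0 \<le> x" "x \<le> h" "0 \<le> y" "y \<le> h" for x y
    using square[of y x] that by (simp add: algebra_simps)
  obtain x y where xy: "0 < x" "x < h" "0 < y" "y < h"
    and D1: "G (p + h *\<^sub>R v + h *\<^sub>R w) - G (p + h *\<^sub>R v) - G (p + h *\<^sub>R w) + G p
               = h * h * Gvw (p + x *\<^sub>R v + y *\<^sub>R w)"
    using second_difference_mvt[OF Gv Gvw h square] by blast
  obtain x' y' where xy': "0 < x'" "x' < h" "0 < y'" "y' < h"
    and D2: "G (p + h *\<^sub>R w + h *\<^sub>R v) - G (p + h *\<^sub>R w) - G (p + h *\<^sub>R v) + G p
               = h * h * Gwv (p + x' *\<^sub>R w + y' *\<^sub>R v)"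
    using second_difference_mvt[OF Gw Gwv h square'] by blast
  have eq: "Gvw (p + x *\<^sub>R v + y *\<^sub>R w) = Gwv (p + x' *\<^sub>R w + y' *\<^sub>R v)"
    using D1 D2 h by (simp add: algebra_simps)
  have "dist (Gvw (p + x *\<^sub>R v + y *\<^sub>R w)) (Gvw p) < e"
    using d1(2) square[of x y] close[of x y] xy by (auto simp: d_def)
  moreover have "dist (Gwv (p + x' *\<^sub>R w + y' *\<^sub>R v)) (Gwv p) < e"
    using d2(2) square[of y' x'] close[of y' x'] xy' by (auto simp: d_def algebra_simps)
  ultimately have "\<bar>Gvw p - Gwv p\<bar> < 2 * e" using eq by (simp add: dist_real_def)
  then show False by (simp add: e_def)
qed

section \<open>Integrals over the half-plane r > 0\<close>

definition hp_integral :: "(real \<Rightarrow> real \<Rightarrow> real) \<Rightarrow> real" where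
  "hp_integral g = (LINT z|lborel. (LINT r:{0<..}|lborel. g r z))"

definition cauchy_weight :: "real \<Rightarrow> real \<Rightarrow> real" where
  "cauchy_weight r z = inverse (1 + r\<^sup>2) * inverse (1 + z\<^sup>2)"

definition hp_dominated :: "(real \<Rightarrow> real \<Rightarrow> real) \<Rightarrow> bool" where
  "hp_dominated g \<longleftrightarrow> continuous_on ({0<..} \<times> UNIV) (\<lambda>(r, z). g r z) \<and>
     (\<exists>C. \<forall>r>0. \<forall>z. \<bar>g r z\<bar> \<le> C * cauchy_weight r z)"

text \<open>Arguments in the order (z, r) of the iterated integral in hp_integral.\<close>
definition zero_extension :: "(real \<Rightarrow> real \<Rightarrow> real) \<Rightarrow> real \<Rightarrow> real \<Rightarrow> real" where
  "zero_extension g z r = indicator {0<..} r * g r z"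

lemma cauchy_weight_pos: "0 < cauchy_weight r z"
  unfolding cauchy_weight_def by (intro mult_pos_pos) (auto intro!: add_pos_nonneg)

lemma integrable_cauchy_weight:
  shows "integrable lborel (\<lambda>r. C * cauchy_weight r z)"
    and "integrable lborel (\<lambda>z. C * cauchy_weight r z)"
  unfolding cauchy_weight_def using integrable_inverse_1_plus_square_lborel
  by (auto intro!: integrable_mult_right integrable_mult_left simp: mult.assoc)

lemma hp_dominated_cauchy_weight: "hp_dominated (\<lambda>r z. C * cauchy_weight r z)"
proof -
  have "continuous_on ({0<..} \<times> UNIV)
          (\<lambda>x. C * (inverse (1 + (fst x)\<^sup>2) * inverse (1 + (snd x)\<^sup>2)))"
    by (intro continuous_intros) (auto simp: add_nonneg_eq_0_iff)
  moreover have "\<forall>r>0. \<forall>z. \<bar>C * cauchy_weight r z\<bar> \<le> \<bar>C\<bar> * cauchy_weight r z"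
    using cauchy_weight_pos by (simp add: abs_mult less_imp_le)
  ultimately show ?thesis unfolding hp_dominated_def cauchy_weight_def by (auto simp: case_prod_unfold)
qed

lemma hp_dominated_bound:
  assumes "hp_dominated g" shows "\<exists>C\<ge>0. \<forall>r>0. \<forall>z. \<bar>g r z\<bar> \<le> C * cauchy_weight r z"
proof -
  obtain C where C: "\<forall>r>0. \<forall>z. \<bar>g r z\<bar> \<le> C * cauchy_weight r z"
    using assms by (auto simp: hp_dominated_def)
  have "0 \<le> C * cauchy_weight 1 0" using C[rule_format, of 1 0] by (meson abs_ge_zero order_trans zero_less_one)
  then have "0 \<le> C" using cauchy_weight_pos[of 1 0] by (simp add: zero_le_mult_iff)
  with C show ?thesis by blast
qed

lemma hp_dominated_isCont:
  assumes "hp_dominated g" "0 < r"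
  shows "isCont (\<lambda>r. g r z) r" and "isCont (\<lambda>z. g r z) z"
proof -
  have c: "isCont (\<lambda>(r, z). g r z) (r, z)"
    using assms by (simp add: hp_dominated_def continuous_on_eq_continuous_at open_Times)
  show "isCont (\<lambda>r. g r z) r"
    using continuous_at_compose[where f="\<lambda>r. (r, z)", OF _ c] by (simp add: o_def)
  show "isCont (\<lambda>z. g r z) z"
    using continuous_at_compose[where f="\<lambda>z. (r, z)", OF _ c] by (simp add: o_def)
qed

lemma borel_measurable_zero_extension:
  assumes "hp_dominated g"
  shows "case_prod (zero_extension g) \<in> borel_measurable (lborel \<Otimes>\<^sub>M lborel)"
proof -
  have "continuous_on ({0<..} \<times> UNIV) (\<lambda>(r, z). g r z)" using assms by (simp add: hp_dominated_def)
  then have "continuous_on (UNIV \<times> {0<..}) (\<lambda>x. (\<lambda>(r, z). g r z) ((\<lambda>(z, r). (r, z)) x))"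
    by (rule continuous_on_compose2) (auto intro!: continuous_intros simp: case_prod_unfold)
  then have cont: "continuous_on (UNIV \<times> {0<..}) (\<lambda>(z, r). g r z)" by (simp add: case_prod_unfold)
  have "(\<lambda>x. indicator (UNIV \<times> {0<..}) x *\<^sub>R (\<lambda>(z, r). g r z) x) \<in> borel_measurable borel"
    by (rule borel_measurable_continuous_on_indicator[OF _ cont]) (intro borel_open open_Times open_UNIV open_greaterThan)
  moreover have "(\<lambda>x. indicator (UNIV \<times> {0<..}) x *\<^sub>R (\<lambda>(z, r). g r z) x) = case_prod (zero_extension g)"
    by (auto simp: zero_extension_def indicator_def fun_eq_iff)
  ultimately show ?thesis by (simp add: lborel_prod)
qed

lemma hp_dominated_set_integrable:
  assumes "hp_dominated g" shows "set_integrable lborel {0<..} (\<lambda>r. g r z)"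
proof -
  obtain C where C: "\<forall>r>0. \<forall>z. \<bar>g r z\<bar> \<le> C * cauchy_weight r z"
    using assms by (auto simp: hp_dominated_def)
  have "(\<lambda>r. zero_extension g z r) \<in> borel_measurable lborel"
    using measurable_Pair2[OF borel_measurable_zero_extension[OF assms]] by simp
  then show ?thesis
    unfolding set_integrable_def
    by (intro Bochner_Integration.integrable_bound[OF integrable_cauchy_weight(1)[of C z]] AE_I2)
       (use C in \<open>auto simp: zero_extension_def indicator_def intro: order_trans[OF _ abs_ge_self]\<close>)
qed

lemma integrable_zero_extension:
  assumes g: "hp_dominated g"
  shows "integrable (lborel \<Otimes>\<^sub>M lborel) (case_prod (zero_extension g))"
proof (rule lborel_pair.Fubini_integrable)
  obtain C where C: "\<forall>r>0. \<forall>z. \<bar>g r z\<bar> \<le> C * cauchy_weight r z" and C0: "0 \<le> C"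
    using hp_dominated_bound[OF g] by blast
  show meas: "case_prod (zero_extension g) \<in> borel_measurable (lborel \<Otimes>\<^sub>M lborel)"
    by (rule borel_measurable_zero_extension[OF g])
  show "AE z in lborel. integrable lborel (\<lambda>r. case_prod (zero_extension g) (z, r))"
    using hp_dominated_set_integrable[OF g] by (simp add: set_integrable_def zero_extension_def)
  have slice: "integrable lborel (\<lambda>r. norm (zero_extension g z r))" for z
    using hp_dominated_set_integrable[OF g, of z]
    by (simp add: set_integrable_def zero_extension_def)
  have "integrable lborel (\<lambda>z. \<integral>r. C * cauchy_weight r z \<partial>lborel)"
    unfolding cauchy_weight_def using integrable_inverse_1_plus_square_lborel by simp
  then show "integrable lborel (\<lambda>z. \<integral>r. norm (case_prod (zero_extension g) (z, r)) \<partial>lborel)"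
  proof (rule Bochner_Integration.integrable_bound)
    have "(\<lambda>(z, r). norm (zero_extension g z r)) \<in> borel_measurable (lborel \<Otimes>\<^sub>M lborel)"
      using meas by measurable
    from lborel.borel_measurable_lebesgue_integral[OF this]
    show "(\<lambda>z. \<integral>r. norm (case_prod (zero_extension g) (z, r)) \<partial>lborel) \<in> borel_measurable lborel"
      by simp
    show "AE z in lborel. norm (\<integral>r. norm (case_prod (zero_extension g) (z, r)) \<partial>lborel)
                           \<le> norm (\<integral>r. C * cauchy_weight r z \<partial>lborel)"
    proof (intro AE_I2)
      fix z
      have "(\<integral>r. norm (zero_extension g z r) \<partial>lborel) \<le> (\<integral>r. C * cauchy_weight r z \<partial>lborel)"
        by (rule integral_mono[OF slice integrable_cauchy_weight(1)])
           (use C C0 cauchy_weight_pos[THEN less_imp_le] in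
             \<open>auto simp: zero_extension_def indicator_def\<close>)
      then show "norm (\<integral>r. norm (case_prod (zero_extension g) (z, r)) \<partial>lborel)
                   \<le> norm (\<integral>r. C * cauchy_weight r z \<partial>lborel)"
        by (auto intro: order_trans[OF _ abs_ge_self] simp: integral_nonneg_AE)
    qed
  qed
qed

lemma hp_integral_eq_pair_integral:
  "hp_dominated g \<Longrightarrow> hp_integral g = integral\<^sup>L (lborel \<Otimes>\<^sub>M lborel) (case_prod (zero_extension g))"
  unfolding hp_integral_def set_lebesgue_integral_def
  using lborel_pair.integral_fst[OF integrable_zero_extension, of g]
  by (simp add: zero_extension_def[abs_def])

lemma hp_dominated_add:
  assumes f: "hp_dominated f" and g: "hp_dominated g"
  shows "hp_dominated (\<lambda>r z. f r z + g r z)"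
proof -
  obtain C1 where C1: "\<forall>r>0. \<forall>z. \<bar>f r z\<bar> \<le> C1 * cauchy_weight r z"
    using f by (auto simp: hp_dominated_def)
  obtain C2 where C2: "\<forall>r>0. \<forall>z. \<bar>g r z\<bar> \<le> C2 * cauchy_weight r z"
    using g by (auto simp: hp_dominated_def)
  have "continuous_on ({0<..} \<times> UNIV) (\<lambda>x. (\<lambda>(r, z). f r z) x + (\<lambda>(r, z). g r z) x)"
    using f g by (intro continuous_on_add) (auto simp: hp_dominated_def)
  moreover have "\<forall>r>0. \<forall>z. \<bar>f r z + g r z\<bar> \<le> (C1 + C2) * cauchy_weight r z"
    using C1 C2 by (auto simp: distrib_right intro!: order_trans[OF abs_triangle_ineq] add_mono)
  ultimately show ?thesis unfolding hp_dominated_def by (auto simp: case_prod_unfold)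
qed

lemma hp_dominated_cmult:
  assumes f: "hp_dominated f" shows "hp_dominated (\<lambda>r z. c * f r z)"
proof -
  obtain C where C: "\<forall>r>0. \<forall>z. \<bar>f r z\<bar> \<le> C * cauchy_weight r z"
    using f by (auto simp: hp_dominated_def)
  have "continuous_on ({0<..} \<times> UNIV) (\<lambda>x. c * (\<lambda>(r, z). f r z) x)"
    using f by (intro continuous_on_mult continuous_on_const) (auto simp: hp_dominated_def)
  moreover have "\<forall>r>0. \<forall>z. \<bar>c * f r z\<bar> \<le> (\<bar>c\<bar> * C) * cauchy_weight r z"
    using C by (auto simp: abs_mult mult.assoc intro!: mult_left_mono)
  ultimately show ?thesis unfolding hp_dominated_def by (auto simp: case_prod_unfold)
qed

lemma hp_dominated_cong:
  assumes "\<And>r z. 0 < r \<Longrightarrow> f r z = g r z" and "hp_dominated f"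
  shows "hp_dominated g"
proof -
  have "continuous_on ({0<..} \<times> UNIV) (\<lambda>(r, z). g r z)"
    by (rule continuous_on_cong[THEN iffD1, OF refl _ conjunct1[OF assms(2)[unfolded hp_dominated_def]]])
       (auto simp: assms(1))
  then show ?thesis using assms unfolding hp_dominated_def by auto
qed

lemma hp_integral_cong: "(\<And>r z. 0 < r \<Longrightarrow> f r z = g r z) \<Longrightarrow> hp_integral f = hp_integral g"
  unfolding hp_integral_def by (intro Bochner_Integration.integral_cong refl set_lebesgue_integral_cong) auto

lemma hp_integral_add:
  assumes f: "hp_dominated f" and g: "hp_dominated g"
  shows "hp_integral (\<lambda>r z. f r z + g r z) = hp_integral f + hp_integral g"
proof -
  have "case_prod (zero_extension (\<lambda>r z. f r z + g r z))
          = (\<lambda>x. case_prod (zero_extension f) x + case_prod (zero_extension g) x)"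
    by (auto simp: zero_extension_def fun_eq_iff algebra_simps)
  then have "hp_integral (\<lambda>r z. f r z + g r z)
      = integral\<^sup>L (lborel \<Otimes>\<^sub>M lborel) (\<lambda>x. case_prod (zero_extension f) x + case_prod (zero_extension g) x)"
    using hp_integral_eq_pair_integral[OF hp_dominated_add[OF f g]] by simp
  also have "\<dots> = hp_integral f + hp_integral g"
    by (simp add: hp_integral_eq_pair_integral[OF f] hp_integral_eq_pair_integral[OF g]
        Bochner_Integration.integral_add[OF integrable_zero_extension[OF f] integrable_zero_extension[OF g]])
  finally show ?thesis .
qed

lemma hp_integral_cmult: "hp_integral (\<lambda>r z. c * f r z) = c * hp_integral f"
  unfolding hp_integral_def by simp

lemma hp_integral_minus: "hp_integral (\<lambda>r z. - f r z) = - hp_integral f"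
  using hp_integral_cmult[of "-1" f] by simp

lemma hp_integral_linear3:
  assumes "hp_dominated f" "hp_dominated g" "hp_dominated h"
  shows "hp_integral (\<lambda>r z. a * f r z + b * g r z + c * h r z)
           = a * hp_integral f + b * hp_integral g + c * hp_integral h"
  using assms by (simp add: hp_integral_add hp_dominated_add hp_dominated_cmult hp_integral_cmult)

lemma hp_integral_nonneg: "(\<And>r z. 0 < r \<Longrightarrow> 0 \<le> g r z) \<Longrightarrow> 0 \<le> hp_integral g"
  unfolding hp_integral_def set_lebesgue_integral_def
  by (intro Bochner_Integration.integral_nonneg_AE AE_I2) (auto simp: indicator_def)

section \<open>Rapidly decreasing functions\<close>

definition decay_bounded :: "'i set \<Rightarrow> ('i \<Rightarrow> real \<Rightarrow> real \<Rightarrow> real) \<Rightarrow> bool" where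
  "decay_bounded I g \<longleftrightarrow> (\<forall>k::nat. \<exists>C. \<forall>i\<in>I. \<forall>r z. (1 + r\<^sup>2 + z\<^sup>2) ^ k * \<bar>g i r z\<bar> \<le> C)"

definition rapidly_decreasing :: "(real \<Rightarrow> real \<Rightarrow> real) \<Rightarrow> bool" where
  "rapidly_decreasing g \<longleftrightarrow>
     continuous_on UNIV (\<lambda>(r, z). g r z) \<and> decay_bounded (UNIV :: unit set) (\<lambda>_. g)"

lemma decay_bounded_bound:
  assumes "decay_bounded I g"
  shows "\<exists>C\<ge>0. \<forall>i\<in>I. \<forall>r z. (1 + r\<^sup>2 + z\<^sup>2) ^ k * \<bar>g i r z\<bar> \<le> C"
proof -
  obtain C where "\<forall>i\<in>I. \<forall>r z. (1 + r\<^sup>2 + z\<^sup>2) ^ k * \<bar>g i r z\<bar> \<le> C"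
    using assms unfolding decay_bounded_def by blast
  then have "\<forall>i\<in>I. \<forall>r z. (1 + r\<^sup>2 + z\<^sup>2) ^ k * \<bar>g i r z\<bar> \<le> max C 0"
    by (meson max.coboundedI1)
  then show ?thesis by (intro exI[of _ "max C 0"]) simp
qed

lemma decay_bounded_add:
  assumes f: "decay_bounded I f" and g: "decay_bounded I g"
  shows "decay_bounded I (\<lambda>i r z. f i r z + g i r z)"
  unfolding decay_bounded_def
proof
  fix k
  obtain C1 where C1: "\<forall>i\<in>I. \<forall>r z. (1 + r\<^sup>2 + z\<^sup>2) ^ k * \<bar>f i r z\<bar> \<le> C1"
    using f unfolding decay_bounded_def by blast
  obtain C2 where C2: "\<forall>i\<in>I. \<forall>r z. (1 + r\<^sup>2 + z\<^sup>2) ^ k * \<bar>g i r z\<bar> \<le> C2"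
    using g unfolding decay_bounded_def by blast
  have "(1 + r\<^sup>2 + z\<^sup>2) ^ k * \<bar>f i r z + g i r z\<bar> \<le> C1 + C2" if "i \<in> I" for i r z
  proof -
    have "(1 + r\<^sup>2 + z\<^sup>2) ^ k * \<bar>f i r z + g i r z\<bar>
            \<le> (1 + r\<^sup>2 + z\<^sup>2) ^ k * \<bar>f i r z\<bar> + (1 + r\<^sup>2 + z\<^sup>2) ^ k * \<bar>g i r z\<bar>"
      by (simp add: distrib_left[symmetric] mult_left_mono abs_triangle_ineq)
    then show ?thesis using C1[rule_format, OF that, of r z] C2[rule_format, OF that, of r z] by linarith
  qed
  then show "\<exists>C. \<forall>i\<in>I. \<forall>r z. (1 + r\<^sup>2 + z\<^sup>2) ^ k * \<bar>f i r z + g i r z\<bar> \<le> C" by blast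
qed

lemma decay_bounded_mult:
  assumes f: "decay_bounded I f" and g: "decay_bounded I g"
  shows "decay_bounded I (\<lambda>i r z. f i r z * g i r z)"
  unfolding decay_bounded_def
proof
  fix k
  obtain C1 where C1: "\<forall>i\<in>I. \<forall>r z. (1 + r\<^sup>2 + z\<^sup>2) ^ k * \<bar>f i r z\<bar> \<le> C1" "C1 \<ge> 0"
    using decay_bounded_bound[OF f] by blast
  obtain C2 where C2: "\<forall>i\<in>I. \<forall>r z. (1 + r\<^sup>2 + z\<^sup>2) ^ 0 * \<bar>g i r z\<bar> \<le> C2"
    using decay_bounded_bound[OF g] by blast
  have "(1 + r\<^sup>2 + z\<^sup>2) ^ k * \<bar>f i r z * g i r z\<bar> \<le> C1 * C2" if "i \<in> I" for i r z
    using mult_mono[of "(1 + r\<^sup>2 + z\<^sup>2) ^ k * \<bar>f i r z\<bar>" C1 "\<bar>g i r z\<bar>" C2] C1 C2 that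
    by (simp add: abs_mult mult.assoc)
  then show "\<exists>C. \<forall>i\<in>I. \<forall>r z. (1 + r\<^sup>2 + z\<^sup>2) ^ k * \<bar>f i r z * g i r z\<bar> \<le> C" by blast
qed

lemma decay_bounded_cmult:
  assumes "decay_bounded I f" shows "decay_bounded I (\<lambda>i r z. c * f i r z)"
  unfolding decay_bounded_def
proof
  fix k
  obtain C where C: "\<forall>i\<in>I. \<forall>r z. (1 + r\<^sup>2 + z\<^sup>2) ^ k * \<bar>f i r z\<bar> \<le> C"
    using assms unfolding decay_bounded_def by blast
  have "(1 + r\<^sup>2 + z\<^sup>2) ^ k * \<bar>c * f i r z\<bar> \<le> \<bar>c\<bar> * C" if "i \<in> I" for i r z
    using mult_left_mono[OF C[rule_format, OF that, of r z], of "\<bar>c\<bar>"] by (simp add: abs_mult ac_simps)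
  then show "\<exists>C. \<forall>i\<in>I. \<forall>r z. (1 + r\<^sup>2 + z\<^sup>2) ^ k * \<bar>c * f i r z\<bar> \<le> C" by blast
qed

lemma abs_le_poly_weight: "\<bar>r\<bar> \<le> 1 + r\<^sup>2 + (z::real)\<^sup>2"
proof -
  have "\<bar>r\<bar> \<le> 1 + r\<^sup>2"
  proof (cases "\<bar>r\<bar> \<le> 1")
    case False
    then have "\<bar>r\<bar> * 1 \<le> \<bar>r\<bar> * \<bar>r\<bar>" by (intro mult_left_mono) auto
    then show ?thesis by (simp add: power2_eq_square abs_mult[symmetric])
  qed (use zero_le_power2[of r] in linarith)
  then show ?thesis by (smt (verit) zero_le_power2)
qed

lemma decay_bounded_mult_radius:
  assumes "decay_bounded I g" shows "decay_bounded I (\<lambda>i r z. r * g i r z)"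
  unfolding decay_bounded_def
proof
  fix k
  obtain C where C: "\<forall>i\<in>I. \<forall>r z. (1 + r\<^sup>2 + z\<^sup>2) ^ Suc k * \<bar>g i r z\<bar> \<le> C"
    using assms unfolding decay_bounded_def by blast
  have "(1 + r\<^sup>2 + z\<^sup>2) ^ k * \<bar>r * g i r z\<bar> \<le> (1 + r\<^sup>2 + z\<^sup>2) ^ Suc k * \<bar>g i r z\<bar>" for i r z
  proof -
    have "(1 + r\<^sup>2 + z\<^sup>2) ^ k * \<bar>r * g i r z\<bar>
            \<le> (1 + r\<^sup>2 + z\<^sup>2) ^ k * ((1 + r\<^sup>2 + z\<^sup>2) * \<bar>g i r z\<bar>)"
      unfolding abs_mult by (intro mult_left_mono mult_right_mono abs_le_poly_weight) auto
    then show ?thesis by (simp add: ac_simps)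
  qed
  then show "\<exists>C. \<forall>i\<in>I. \<forall>r z. (1 + r\<^sup>2 + z\<^sup>2) ^ k * \<bar>r * g i r z\<bar> \<le> C"
    using C by (meson order_trans)
qed

lemma rapidly_decreasingI:
  "continuous_on UNIV (\<lambda>x. g (fst x) (snd x)) \<Longrightarrow> decay_bounded (UNIV :: unit set) (\<lambda>_. g)
    \<Longrightarrow> rapidly_decreasing g"
  by (simp add: rapidly_decreasing_def case_prod_unfold)

lemma rapidly_decreasingD:
  assumes "rapidly_decreasing g"
  shows "continuous_on UNIV (\<lambda>x. g (fst x) (snd x))" and "decay_bounded (UNIV :: unit set) (\<lambda>_. g)"
  using assms by (simp_all add: rapidly_decreasing_def case_prod_unfold)

lemma rapidly_decreasing_add:
  assumes "rapidly_decreasing f" "rapidly_decreasing g"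
  shows "rapidly_decreasing (\<lambda>r z. f r z + g r z)"
  using continuous_on_add[OF assms[THEN rapidly_decreasingD(1)]]
    decay_bounded_add[OF assms[THEN rapidly_decreasingD(2)]]
  by (rule rapidly_decreasingI)

lemma rapidly_decreasing_mult:
  assumes "rapidly_decreasing f" "rapidly_decreasing g"
  shows "rapidly_decreasing (\<lambda>r z. f r z * g r z)"
  using continuous_on_mult[OF assms[THEN rapidly_decreasingD(1)]]
    decay_bounded_mult[OF assms[THEN rapidly_decreasingD(2)]]
  by (rule rapidly_decreasingI)

lemma rapidly_decreasing_cmult:
  assumes "rapidly_decreasing f"
  shows "rapidly_decreasing (\<lambda>r z. c * f r z)"
  using continuous_on_mult[OF continuous_on_const assms[THEN rapidly_decreasingD(1)]]
    decay_bounded_cmult[OF assms[THEN rapidly_decreasingD(2)]]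
  by (rule rapidly_decreasingI)

lemma rapidly_decreasing_mult_radius:
  assumes "rapidly_decreasing f"
  shows "rapidly_decreasing (\<lambda>r z. r * f r z)"
  using continuous_on_mult[OF continuous_on_fst[OF continuous_on_id] assms[THEN rapidly_decreasingD(1)]]
    decay_bounded_mult_radius[OF assms[THEN rapidly_decreasingD(2)]]
  by (rule rapidly_decreasingI)

lemma powr_le_poly_weight:
  fixes r p z :: real
  assumes r: "0 < r" and p: "0 \<le> p"
  shows "r powr p \<le> (1 + r\<^sup>2 + z\<^sup>2) ^ nat \<lceil>p\<rceil>"
proof -
  let ?q = "1 + r\<^sup>2 + z\<^sup>2"
  have q: "1 \<le> ?q" by simp
  have "r powr p \<le> ?q powr p" using r p abs_le_poly_weight[of r z] by (intro powr_mono2) auto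
  also have "\<dots> \<le> ?q powr real (nat \<lceil>p\<rceil>)" using q p by (intro powr_mono) auto
  also have "\<dots> = ?q ^ nat \<lceil>p\<rceil>" by (intro powr_realpow) (simp add: add_pos_nonneg)
  finally show ?thesis .
qed

lemma inverse_poly_weight_le_cauchy_weight:
  "inverse ((1 + r\<^sup>2 + z\<^sup>2) ^ 2) \<le> cauchy_weight r z"
proof -
  have "(1 + r\<^sup>2 + z\<^sup>2) ^ 2 = (1 + r\<^sup>2) * (1 + z\<^sup>2) + (r\<^sup>2 + z\<^sup>2 + r\<^sup>2 * r\<^sup>2 + r\<^sup>2 * z\<^sup>2 + z\<^sup>2 * z\<^sup>2)"
    by (simp add: power2_eq_square algebra_simps)
  moreover have "0 \<le> r\<^sup>2 + z\<^sup>2 + r\<^sup>2 * r\<^sup>2 + r\<^sup>2 * z\<^sup>2 + z\<^sup>2 * z\<^sup>2" by simp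
  ultimately have "(1 + r\<^sup>2) * (1 + z\<^sup>2) \<le> (1 + r\<^sup>2 + z\<^sup>2) ^ 2" by linarith
  then show ?thesis
    unfolding cauchy_weight_def
    by (subst inverse_mult_distrib[symmetric], intro le_imp_inverse_le) (auto intro!: add_pos_nonneg mult_pos_pos)
qed

lemma decay_bounded_powr_weight:
  assumes g: "decay_bounded I g" and p: "0 \<le> p"
  shows "\<exists>C. \<forall>i\<in>I. \<forall>r>0. \<forall>z. \<bar>r powr p * g i r z\<bar> \<le> C * cauchy_weight r z"
proof -
  define k where "k = nat \<lceil>p\<rceil>"
  obtain C where C: "\<forall>i\<in>I. \<forall>r z. (1 + r\<^sup>2 + z\<^sup>2) ^ (k + 2) * \<bar>g i r z\<bar> \<le> C" "C \<ge> 0"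
    using decay_bounded_bound[OF g] by blast
  have cancel: "a * b = (a * Q * b) * inverse Q" if "Q \<noteq> 0" for a b Q :: real
    using that by (simp add: field_simps)
  have "\<bar>r powr p * g i r z\<bar> \<le> C * cauchy_weight r z" if r: "0 < r" and i: "i \<in> I" for i r z
  proof -
    let ?q = "1 + r\<^sup>2 + z\<^sup>2"
    have q: "0 < ?q" by (simp add: add_pos_nonneg)
    have "\<bar>r powr p * g i r z\<bar> = r powr p * \<bar>g i r z\<bar>" using r by (simp add: abs_mult)
    also have "\<dots> \<le> ?q ^ k * \<bar>g i r z\<bar>"
      unfolding k_def by (rule mult_right_mono[OF powr_le_poly_weight[OF r p]]) simp
    also have "\<dots> = (?q ^ k * ?q ^ 2 * \<bar>g i r z\<bar>) * inverse (?q ^ 2)"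
      using q by (intro cancel) simp
    also have "\<dots> = (?q ^ (k + 2) * \<bar>g i r z\<bar>) * inverse (?q ^ 2)"
      by (simp only: power_add)
    also have "\<dots> \<le> C * inverse (?q ^ 2)"
      using C i q by (intro mult_right_mono) auto
    also have "\<dots> \<le> C * cauchy_weight r z"
      using C inverse_poly_weight_le_cauchy_weight by (intro mult_left_mono) auto
    finally show ?thesis .
  qed
  then show ?thesis by blast
qed

lemma hp_dominated_powr_weight:
  assumes g: "rapidly_decreasing g" and p: "0 \<le> p"
  shows "hp_dominated (\<lambda>r z. r powr p * g r z)"
proof -
  have "continuous_on ({0<..} \<times> UNIV) (\<lambda>x. fst x powr p * g (fst x) (snd x))"
    by (intro continuous_on_mult continuous_on_subset[OF rapidly_decreasingD(1)[OF g]] continuous_intros)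
       auto
  moreover obtain C where "\<forall>r>0. \<forall>z. \<bar>r powr p * g r z\<bar> \<le> C * cauchy_weight r z"
    using decay_bounded_powr_weight[OF rapidly_decreasingD(2)[OF g] p] by blast
  ultimately show ?thesis unfolding hp_dominated_def case_prod_unfold by blast
qed

section \<open>Integrals of derivatives over the half-plane\<close>

lemma tendsto_inverse_1_plus_square:
  shows "((\<lambda>x::real. inverse (1 + x\<^sup>2)) \<longlongrightarrow> 0) at_top"
    and "((\<lambda>x::real. inverse (1 + x\<^sup>2)) \<longlongrightarrow> 0) at_bot"
  by (rule tendsto_inverse_0_at_top, rule filterlim_tendsto_add_at_top[OF tendsto_const],
      rule filterlim_pow_at_top[OF _ filterlim_ident], simp)
     (rule tendsto_inverse_0_at_top, rule filterlim_tendsto_add_at_top[OF tendsto_const],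
      rule filterlim_pow_at_bot_even[OF _ filterlim_ident], simp_all)

lemma hp_dominated_tendsto_0:
  assumes "hp_dominated g"
  shows "((\<lambda>r. g r z) \<longlongrightarrow> 0) at_top"
    and "0 < r \<Longrightarrow> ((\<lambda>z. g r z) \<longlongrightarrow> 0) at_top"
    and "0 < r \<Longrightarrow> ((\<lambda>z. g r z) \<longlongrightarrow> 0) at_bot"
proof -
  obtain C where C: "\<forall>r>0. \<forall>z. \<bar>g r z\<bar> \<le> C * cauchy_weight r z"
    using assms by (auto simp: hp_dominated_def)
  have lim: "((\<lambda>x. C * (inverse (1 + x\<^sup>2) * d)) \<longlongrightarrow> 0) F"
    "((\<lambda>x. C * (d * inverse (1 + x\<^sup>2))) \<longlongrightarrow> 0) F"
    if "F = at_top \<or> F = at_bot" for d F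
    using that tendsto_inverse_1_plus_square
    by (auto intro!: tendsto_mult_right_zero tendsto_mult_left_zero)
  have "\<forall>\<^sub>F r in at_top. norm (g r z) \<le> C * (inverse (1 + r\<^sup>2) * inverse (1 + z\<^sup>2))"
    using eventually_gt_at_top[of 0] by eventually_elim (use C in \<open>auto simp: cauchy_weight_def\<close>)
  then show "((\<lambda>r. g r z) \<longlongrightarrow> 0) at_top"
    by (rule Lim_null_comparison[OF _ lim(1)]) simp
  assume "0 < r"
  then have bound: "\<forall>\<^sub>F z in F. norm (g r z) \<le> C * (inverse (1 + r\<^sup>2) * inverse (1 + z\<^sup>2))" for F
    using C by (auto intro!: always_eventually simp: cauchy_weight_def)
  show "((\<lambda>z. g r z) \<longlongrightarrow> 0) at_top" by (rule Lim_null_comparison[OF bound lim(2)]) simp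
  show "((\<lambda>z. g r z) \<longlongrightarrow> 0) at_bot" by (rule Lim_null_comparison[OF bound lim(2)]) simp
qed

lemma rapidly_decreasing_powr_tendsto_0:
  assumes g: "rapidly_decreasing g" and p: "0 < p"
  shows "((\<lambda>r. r powr p * g r z) \<longlongrightarrow> 0) (at_right 0)"
proof -
  from decay_bounded_bound[OF rapidly_decreasingD(2)[OF g], of 0] obtain C where C: "\<forall>r z. \<bar>g r z\<bar> \<le> C" "C \<ge> 0"
    by auto
  have "((\<lambda>r::real. r powr p) \<longlongrightarrow> 0) (at_right 0)"
    by (rule tendsto_zero_powrI[OF _ tendsto_const])
       (auto simp: p eventually_at_right_less intro!: tendsto_ident_at eventually_at_rightI[of 0 1])
  then have lim: "((\<lambda>r. C * r powr p) \<longlongrightarrow> 0) (at_right 0)"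
    by (rule tendsto_mult_right_zero)
  have "\<forall>\<^sub>F r in at_right 0. \<bar>r powr p * g r z\<bar> \<le> C * r powr p"
    using eventually_at_right_less[of 0]
    by eventually_elim (use C in \<open>auto simp: abs_mult intro: mult_left_mono\<close>)
  then show ?thesis
    by (intro tendsto_sandwich[OF _ _ tendsto_minus[OF lim, simplified] lim])
       (auto elim!: eventually_mono simp: abs_le_iff)
qed

lemma hp_integral_vertical_flux_eq_0:
  assumes b: "rapidly_decreasing b" and p: "0 \<le> p" and B': "hp_dominated B'"
    and deriv: "\<And>r z. 0 < r \<Longrightarrow> ((\<lambda>s. r powr p * b r s) has_real_derivative B' r z) (at z)"
  shows "hp_integral B' = 0"
proof -
  note flux = hp_dominated_powr_weight[OF b p]
  have "hp_integral B' = (LINT z|lborel. LINT r|lborel. zero_extension B' z r)"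
    by (simp add: hp_integral_def set_lebesgue_integral_def zero_extension_def)
  also have "\<dots> = (LINT r|lborel. LINT z|lborel. zero_extension B' z r)"
    using lborel_pair.Fubini_integral[OF integrable_zero_extension[OF B']] by simp
  also have "\<dots> = 0"
  proof -
    have "(LINT z|lborel. B' r z) = 0" if r: "0 < r" for r
    proof (rule integral_deriv_eq_0[where B="\<lambda>z. r powr p * b r z"])
      obtain C where C: "\<forall>r>0. \<forall>z. \<bar>B' r z\<bar> \<le> C * cauchy_weight r z"
        using B' by (auto simp: hp_dominated_def)
      have "continuous_on UNIV (B' r)"
        using hp_dominated_isCont(2)[OF B' r] by (simp add: continuous_at_imp_continuous_on)
      then have "B' r \<in> borel_measurable lborel" by (simp add: borel_measurable_continuous_onI)
      then show "integrable lborel (B' r)"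
        by (intro Bochner_Integration.integrable_bound[OF integrable_cauchy_weight(2)[of C r]] AE_I2)
           (use C r in \<open>auto intro: order_trans[OF _ abs_ge_self]\<close>)
    qed (use r deriv hp_dominated_isCont(2)[OF B'] hp_dominated_tendsto_0(2,3)[OF flux] in auto)
    then have "(LINT z|lborel. zero_extension B' z r) = 0" for r
      by (cases "0 < r") (simp_all add: zero_extension_def)
    then show ?thesis by simp
  qed
  finally show ?thesis .
qed

lemma hp_integral_divergence_eq_0:
  assumes a: "rapidly_decreasing a" and pa: "0 < pa" and A': "hp_dominated A'"
    and b: "rapidly_decreasing b" and pb: "0 \<le> pb" and B': "hp_dominated B'"
    and deriv_r: "\<And>r z. 0 < r \<Longrightarrow> ((\<lambda>s. s powr pa * a s z) has_real_derivative A' r z) (at r)"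
    and deriv_z: "\<And>r z. 0 < r \<Longrightarrow> ((\<lambda>s. r powr pb * b r s) has_real_derivative B' r z) (at z)"
    and div: "\<And>r z. 0 < r \<Longrightarrow> g r z = A' r z + B' r z"
  shows "hp_integral g = 0"
proof -
  have "hp_integral A' = 0"
  proof -
    have "(LINT r:{0<..}|lborel. A' r z) = 0" for z
    proof (rule integral_Ioi_deriv_eq_0[where A="\<lambda>r. r powr pa * a r z"])
      show "((\<lambda>r. r powr pa * a r z) \<longlongrightarrow> 0) (at_right 0)"
        by (rule rapidly_decreasing_powr_tendsto_0[OF a pa])
      show "((\<lambda>r. r powr pa * a r z) \<longlongrightarrow> 0) at_top"
        using pa by (intro hp_dominated_tendsto_0(1) hp_dominated_powr_weight[OF a]) simp
      show "set_integrable lborel {0<..} (\<lambda>r. A' r z)"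
        by (rule hp_dominated_set_integrable[OF A'])
    qed (use deriv_r hp_dominated_isCont(1)[OF A'] in blast)+
    then show ?thesis by (simp add: hp_integral_def)
  qed
  moreover have "hp_integral B' = 0" by (rule hp_integral_vertical_flux_eq_0[OF b pb B' deriv_z])
  ultimately show ?thesis using hp_integral_cong[OF div] hp_integral_add[OF A' B'] by simp
qed

lemma has_real_derivative_hp_integral:
  assumes t0: "a < t0" "t0 < b"
    and e: "\<And>\<tau>. a < \<tau> \<Longrightarrow> \<tau> < b \<Longrightarrow> hp_dominated (e \<tau>)"
    and deriv: "\<And>\<tau> r z. a < \<tau> \<Longrightarrow> \<tau> < b \<Longrightarrow> 0 < r \<Longrightarrow>
                  ((\<lambda>s. e s r z) has_real_derivative e' \<tau> r z) (at \<tau>)"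
    and e': "hp_dominated (e' t0)"
    and bound: "\<And>\<tau> r z. a < \<tau> \<Longrightarrow> \<tau> < b \<Longrightarrow> 0 < r \<Longrightarrow> \<bar>e' \<tau> r z\<bar> \<le> C * cauchy_weight r z"
  shows "((\<lambda>\<tau>. hp_integral (e \<tau>)) has_real_derivative hp_integral (e' t0)) (at t0)"
proof -
  let ?M = "lborel \<Otimes>\<^sub>M lborel :: (real \<times> real) measure"
  have "((\<lambda>\<tau>. integral\<^sup>L ?M (case_prod (zero_extension (e \<tau>)))) has_real_derivative
          integral\<^sup>L ?M (case_prod (zero_extension (e' t0)))) (at t0)"
  proof (rule has_real_derivative_integral[OF t0,
        where h="case_prod (zero_extension (\<lambda>r z. C * cauchy_weight r z))"])
    show "((\<lambda>s. case_prod (zero_extension (e s)) x) has_real_derivative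
             case_prod (zero_extension (e' \<tau>)) x) (at \<tau>)"
      if "a < \<tau>" "\<tau> < b" "x \<in> space ?M" for \<tau> x
      using deriv[OF that(1,2), of "snd x" "fst x"]
      by (cases "0 < snd x") (simp_all add: zero_extension_def case_prod_unfold)
    show "\<bar>case_prod (zero_extension (e' \<tau>)) x\<bar> \<le> case_prod (zero_extension (\<lambda>r z. C * cauchy_weight r z)) x"
      if "a < \<tau>" "\<tau> < b" "x \<in> space ?M" for \<tau> x
      using bound[OF that(1,2)] by (auto simp: zero_extension_def case_prod_unfold indicator_def)
    show "integrable ?M (case_prod (zero_extension (e \<tau>)))" if "a < \<tau>" "\<tau> < b" for \<tau>
      by (rule integrable_zero_extension[OF e[OF that]])
    show "case_prod (zero_extension (e' t0)) \<in> borel_measurable ?M"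
      by (rule borel_measurable_zero_extension[OF e'])
    show "integrable ?M (case_prod (zero_extension (\<lambda>r z. C * cauchy_weight r z)))"
      by (rule integrable_zero_extension[OF hp_dominated_cauchy_weight])
  qed
  then show ?thesis unfolding hp_integral_eq_pair_integral[OF e']
  proof (rule has_field_derivative_transform_within_open[where S="{a<..<b}"])
    show "integral\<^sup>L ?M (case_prod (zero_extension (e \<tau>))) = hp_integral (e \<tau>)"
      if "\<tau> \<in> {a<..<b}" for \<tau>
      using hp_integral_eq_pair_integral[OF e] that by simp
  qed (use t0 in auto)
qed

section \<open>Smooth decaying fields on the time slab\<close>

definition et :: "real \<times> real \<times> real" where "et = (1, 0, 0)"
definition er :: "real \<times> real \<times> real" where "er = (0, 1, 0)"
definition ez :: "real \<times> real \<times> real" where "ez = (0, 0, 1)"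

lemma et_er_ez_Basis: "et \<in> Basis" "er \<in> Basis" "ez \<in> Basis"
  by (auto simp: et_def er_def ez_def Basis_prod_def zero_prod_def)

definition uncurry3 :: "(real \<Rightarrow> real \<Rightarrow> real \<Rightarrow> real) \<Rightarrow> real \<times> real \<times> real \<Rightarrow> real" where
  "uncurry3 f = (\<lambda>(t, r, z). f t r z)"

definition curry3 :: "(real \<times> real \<times> real \<Rightarrow> real) \<Rightarrow> real \<Rightarrow> real \<Rightarrow> real \<Rightarrow> real" where
  "curry3 G = (\<lambda>t r z. G (t, r, z))"

lemma uncurry3_apply [simp]: "uncurry3 f (t, r, z) = f t r z"
  by (simp add: uncurry3_def)

lemma curry3_apply [simp]: "curry3 G t r z = G (t, r, z)"
  by (simp add: curry3_def)

lemma uncurry3_curry3 [simp]: "uncurry3 (curry3 G) = G"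
  by (simp add: uncurry3_def curry3_def)

lemma deriv_eq_deriv_shift: "deriv f x = deriv (\<lambda>h. f (x + h)) 0"
  using deriv_shift_0[of f x] by (simp add: o_def)

lemma dr_eq_pd: "dr f = curry3 (pd er (uncurry3 f))"
  unfolding fun_eq_iff dr_def pd_def er_def by (intro allI, subst deriv_eq_deriv_shift) simp

lemma dz_eq_pd: "dz f = curry3 (pd ez (uncurry3 f))"
  unfolding fun_eq_iff dz_def pd_def ez_def by (intro allI, subst deriv_eq_deriv_shift) simp

lemma dt_eq_pd: "dt f = curry3 (pd et (uncurry3 f))"
  unfolding fun_eq_iff dt_def pd_def et_def by (intro allI, subst deriv_eq_deriv_shift) simp

lemma iter_pd_snoc: "iter_pd vs (pd v G) = iter_pd (vs @ [v]) G"
  by (induction vs) auto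

definition slab :: "real \<Rightarrow> (real \<times> real \<times> real) set" where
  "slab T = {0<..<T} \<times> UNIV \<times> UNIV"

lemma open_slab: "open (slab T)"
  unfolding slab_def by (intro open_Times) auto

lemma mem_slab [simp]: "(t, r, z) \<in> slab T \<longleftrightarrow> 0 < t \<and> t < T"
  by (simp add: slab_def)

definition smooth_decaying :: "real \<Rightarrow> (real \<times> real \<times> real \<Rightarrow> real) \<Rightarrow> bool" where
  "smooth_decaying T G \<longleftrightarrow> smooth_on (slab T) G \<and> rapid_decay T G"

lemma smooth_decaying_pd:
  assumes G: "smooth_decaying T G" and v: "v \<in> Basis"
  shows "smooth_decaying T (pd v G)"
proof -
  have "smooth_on (slab T) (pd v G)"
    unfolding smooth_on_def
  proof (intro allI impI)
    fix vs :: "(real \<times> real \<times> real) list" assume "set vs \<subseteq> Basis"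
    then have "set (vs @ [v]) \<subseteq> Basis" using v by auto
    with G show "continuous_on (slab T) (iter_pd vs (pd v G)) \<and>
        (\<forall>w\<in>Basis. \<forall>x\<in>slab T. ((\<lambda>h. iter_pd vs (pd v G) (x + h *\<^sub>R w)) has_real_derivative
           iter_pd (w # vs) (pd v G) x) (at 0))"
      unfolding smooth_decaying_def smooth_on_def by (simp add: iter_pd_snoc)
  qed
  moreover have "rapid_decay T (pd v G)"
    unfolding rapid_decay_def
  proof (intro allI impI)
    fix a b :: real and vs :: "(real \<times> real \<times> real) list" and k :: nat
    assume "0 < a \<and> a \<le> b \<and> b < T \<and> set vs \<subseteq> Basis"
    then have "0 < a \<and> a \<le> b \<and> b < T \<and> set (vs @ [v]) \<subseteq> Basis" using v by auto
    with G show "\<exists>C. \<forall>t\<in>{a..b}. \<forall>r z. (1 + r\<^sup>2 + z\<^sup>2) ^ k * \<bar>iter_pd vs (pd v G) (t, r, z)\<bar> \<le> C"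
      unfolding smooth_decaying_def rapid_decay_def by (simp add: iter_pd_snoc)
  qed
  ultimately show ?thesis by (simp add: smooth_decaying_def)
qed

lemma smooth_decaying_continuous_on: "smooth_decaying T G \<Longrightarrow> continuous_on (slab T) G"
  unfolding smooth_decaying_def smooth_on_def by (drule conjunct1, drule spec[of _ "[]"]) simp

lemma smooth_decaying_has_derivative_along:
  "smooth_decaying T G \<Longrightarrow> v \<in> Basis \<Longrightarrow> x \<in> slab T \<Longrightarrow>
    ((\<lambda>h. G (x + h *\<^sub>R v)) has_real_derivative pd v G x) (at 0)"
  unfolding smooth_decaying_def smooth_on_def by (drule conjunct1, drule spec[of _ "[]"]) simp

lemma smooth_decaying_has_derivative:
  assumes G: "smooth_decaying T G" and t: "0 < t" "t < T"
  shows "((\<lambda>s. G (s, r, z)) has_real_derivative pd et G (t, r, z)) (at t)"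
    and "((\<lambda>s. G (t, s, z)) has_real_derivative pd er G (t, r, z)) (at r)"
    and "((\<lambda>s. G (t, r, s)) has_real_derivative pd ez G (t, r, z)) (at z)"
proof -
  note along = smooth_decaying_has_derivative_along[OF G et_er_ez_Basis(1), of "(t, r, z)"]
    smooth_decaying_has_derivative_along[OF G et_er_ez_Basis(2), of "(t, r, z)"]
    smooth_decaying_has_derivative_along[OF G et_er_ez_Basis(3), of "(t, r, z)"]
  show "((\<lambda>s. G (s, r, z)) has_real_derivative pd et G (t, r, z)) (at t)"
    using along(1) t DERIV_shift[of "\<lambda>s. G (s, r, z)" _ 0 t] by (simp add: et_def add.commute)
  show "((\<lambda>s. G (t, s, z)) has_real_derivative pd er G (t, r, z)) (at r)"
    using along(2) t DERIV_shift[of "\<lambda>s. G (t, s, z)" _ 0 r] by (simp add: er_def add.commute)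
  show "((\<lambda>s. G (t, r, s)) has_real_derivative pd ez G (t, r, z)) (at z)"
    using along(3) t DERIV_shift[of "\<lambda>s. G (t, r, s)" _ 0 z] by (simp add: ez_def add.commute)
qed

lemma smooth_decaying_decay_bounded:
  assumes "smooth_decaying T G" "0 < a" "b < T"
  shows "decay_bounded {a..b} (\<lambda>\<tau> r z. G (\<tau>, r, z))"
proof (cases "a \<le> b")
  case True
  have "rapid_decay T G" using assms(1) by (simp add: smooth_decaying_def)
  then have "\<exists>C. \<forall>t\<in>{a..b}. \<forall>r z. (1 + r\<^sup>2 + z\<^sup>2) ^ k * \<bar>iter_pd [] G (t, r, z)\<bar> \<le> C" for k
    using True assms(2,3) unfolding rapid_decay_def by (metis empty_set empty_subsetI)
  then show ?thesis by (simp add: decay_bounded_def)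
qed (simp add: decay_bounded_def)

lemma smooth_decaying_slice:
  assumes G: "smooth_decaying T G" and t: "0 < t" "t < T"
  shows "rapidly_decreasing (\<lambda>r z. G (t, r, z))"
proof (rule rapidly_decreasingI)
  show "continuous_on UNIV (\<lambda>x. G (t, fst x, snd x))"
    by (rule continuous_on_compose2[OF smooth_decaying_continuous_on[OF G]])
       (auto intro!: continuous_intros simp: t)
  have "decay_bounded {t..t} (\<lambda>\<tau> r z. G (\<tau>, r, z))"
    by (rule smooth_decaying_decay_bounded[OF G t])
  then show "decay_bounded (UNIV :: unit set) (\<lambda>_ r z. G (t, r, z))"
    by (simp add: decay_bounded_def)
qed

lemma smooth_decaying_pd_commute:
  assumes G: "smooth_decaying T G" and v: "v \<in> Basis" and w: "w \<in> Basis" and x: "x \<in> slab T"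
  shows "pd w (pd v G) x = pd v (pd w G) x"
proof (rule second_partials_symmetric[OF open_slab x])
  note D = smooth_decaying_has_derivative_along
  show "\<forall>q\<in>slab T. ((\<lambda>h. G (q + h *\<^sub>R v)) has_real_derivative pd v G q) (at 0)"
    "\<forall>q\<in>slab T. ((\<lambda>h. G (q + h *\<^sub>R w)) has_real_derivative pd w G q) (at 0)"
    "\<forall>q\<in>slab T. ((\<lambda>h. pd v G (q + h *\<^sub>R w)) has_real_derivative pd w (pd v G) q) (at 0)"
    "\<forall>q\<in>slab T. ((\<lambda>h. pd w G (q + h *\<^sub>R v)) has_real_derivative pd v (pd w G) q) (at 0)"
    using D[OF G v] D[OF G w] D[OF smooth_decaying_pd[OF G v] w] D[OF smooth_decaying_pd[OF G w] v]
    by blast+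
  show "continuous_on (slab T) (pd w (pd v G))" "continuous_on (slab T) (pd v (pd w G))"
    by (intro smooth_decaying_continuous_on smooth_decaying_pd G v w)+
qed

lemma pd_cong_slab:
  assumes "\<And>y. y \<in> slab T \<Longrightarrow> G1 y = G2 y" and x: "x \<in> slab T" and v: "v \<in> {er, ez}"
  shows "pd v G1 x = pd v G2 x"
proof -
  have "x + h *\<^sub>R v \<in> slab T" for h using x v by (auto simp: slab_def er_def ez_def)
  then show ?thesis unfolding pd_def using assms(1) by presburger
qed

section \<open>Weighted integration by parts\<close>

definition lap_n_pd :: "real \<Rightarrow> (real \<times> real \<times> real \<Rightarrow> real) \<Rightarrow> real \<Rightarrow> real \<Rightarrow> real \<Rightarrow> real" where
  "lap_n_pd n G t r z = pd er (pd er G) (t, r, z) + n / r * pd er G (t, r, z) + pd ez (pd ez G) (t, r, z)"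

text \<open>The transport term u \<cdot> \<nabla>G for the velocity u^r = -r P_z, u^z = (m - 1) P + r P_r generated by
  the stream function P, where m - 1 = (n + 1)/2.\<close>
definition advection ::
  "real \<Rightarrow> (real \<times> real \<times> real \<Rightarrow> real) \<Rightarrow> (real \<times> real \<times> real \<Rightarrow> real) \<Rightarrow> real \<Rightarrow> real \<Rightarrow> real \<Rightarrow> real"
  where "advection n P G t r z = (- r * pd ez P (t, r, z)) * pd er G (t, r, z)
           + ((n + 1) / 2 * P (t, r, z) + r * pd er P (t, r, z)) * pd ez G (t, r, z)"

lemma lap_n_eq_lap_n_pd: "lap_n n f t r z = lap_n_pd n (uncurry3 f) t r z"
  by (simp add: lap_n_def lap_n_pd_def dr_eq_pd dz_eq_pd)

lemma powr_add_one: "0 < r \<Longrightarrow> r powr (n + 1) = r * r powr n" for r n :: real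
  by (simp add: powr_add)

lemma powr_diff_one: "0 < r \<Longrightarrow> r powr (n - 1) = r powr n / r" for r n :: real
  by (simp add: powr_diff)

lemma hp_dominated_lap_n_pd:
  assumes F: "smooth_decaying T F" and G: "smooth_decaying T G" and t: "0 < t" "t < T" and n: "1 \<le> n"
  shows "hp_dominated (\<lambda>r z. r powr n * F (t, r, z) * lap_n_pd n G t r z)"
proof -
  note pd = smooth_decaying_pd[OF _ et_er_ez_Basis(2)] smooth_decaying_pd[OF _ et_er_ez_Basis(3)]
  note D = smooth_decaying_slice[OF _ t] F pd(1)[OF G] pd(1)[OF pd(1)[OF G]] pd(2)[OF pd(2)[OF G]]
  have "hp_dominated (\<lambda>r z. r powr n * (F (t, r, z) * pd er (pd er G) (t, r, z))
      + r powr n * (F (t, r, z) * pd ez (pd ez G) (t, r, z)) + n * (r powr (n - 1) * (F (t, r, z) * pd er G (t, r, z))))"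
    using n by (intro hp_dominated_add hp_dominated_cmult hp_dominated_powr_weight rapidly_decreasing_mult D) auto
  then show ?thesis
    by (rule hp_dominated_cong[rotated]) (simp add: lap_n_pd_def powr_diff_one algebra_simps)
qed

lemma hp_integral_green:
  assumes F: "smooth_decaying T F" and G: "smooth_decaying T G" and t: "0 < t" "t < T"
    and n: "1 \<le> n"
  shows "hp_integral (\<lambda>r z. r powr n * F (t, r, z) * lap_n_pd n G t r z)
       = - hp_integral (\<lambda>r z. r powr n * (pd er F (t, r, z) * pd er G (t, r, z)
                                          + pd ez F (t, r, z) * pd ez G (t, r, z)))"
proof -
  let ?f = "\<lambda>r z. F (t, r, z)" and ?fr = "\<lambda>r z. pd er F (t, r, z)" and ?fz = "\<lambda>r z. pd ez F (t, r, z)"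
  let ?gr = "\<lambda>r z. pd er G (t, r, z)" and ?gz = "\<lambda>r z. pd ez G (t, r, z)"
  let ?grr = "\<lambda>r z. pd er (pd er G) (t, r, z)" and ?gzz = "\<lambda>r z. pd ez (pd ez G) (t, r, z)"
  note pd = smooth_decaying_pd[OF _ et_er_ez_Basis(2)] smooth_decaying_pd[OF _ et_er_ez_Basis(3)]
  note D = smooth_decaying_slice[OF _ t] F G pd[OF F] pd[OF G] pd[OF pd(1)[OF G]] pd[OF pd(2)[OF G]]
  note dom = hp_dominated_add hp_dominated_cmult hp_dominated_powr_weight
    rapidly_decreasing_mult rapidly_decreasing_add D
  define X where "X r z = r powr n * (?f r z * ?grr r z) + r powr n * (?f r z * ?gzz r z)
      + n * (r powr (n - 1) * (?f r z * ?gr r z))" for r z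
  define Y where "Y r z = r powr n * (?fr r z * ?gr r z) + r powr n * (?fz r z * ?gz r z)" for r z
  have domX: "hp_dominated X" unfolding X_def using n by (intro dom) auto
  have domY: "hp_dominated Y" unfolding Y_def using n by (intro dom) auto
  have "hp_integral (\<lambda>r z. X r z + Y r z) = 0"
  proof (rule hp_integral_divergence_eq_0[where a="\<lambda>r z. ?f r z * ?gr r z" and pa=n
        and b="\<lambda>r z. ?f r z * ?gz r z" and pb=n])
    show "hp_dominated (\<lambda>r z. n * (r powr (n - 1) * (?f r z * ?gr r z))
                              + r powr n * (?fr r z * ?gr r z + ?f r z * ?grr r z))"
      using n by (intro dom) auto
    show "hp_dominated (\<lambda>r z. r powr n * (?fz r z * ?gz r z + ?f r z * ?gzz r z))"
      using n by (intro dom) auto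
    show "((\<lambda>s. s powr n * (?f s z * ?gr s z)) has_real_derivative
        n * (r powr (n - 1) * (?f r z * ?gr r z)) + r powr n * (?fr r z * ?gr r z + ?f r z * ?grr r z)) (at r)"
      if "0 < r" for r z
      using DERIV_mult[OF has_real_derivative_powr[OF that, of n]
          DERIV_mult[OF smooth_decaying_has_derivative(2)[OF F t] smooth_decaying_has_derivative(2)[OF pd(1)[OF G] t]]]
      by (simp add: algebra_simps)
    show "((\<lambda>s. r powr n * (?f r s * ?gz r s)) has_real_derivative
        r powr n * (?fz r z * ?gz r z + ?f r z * ?gzz r z)) (at z)" for r z
      using DERIV_cmult[OF DERIV_mult[OF smooth_decaying_has_derivative(3)[OF F t]
            smooth_decaying_has_derivative(3)[OF pd(2)[OF G] t]], of "r powr n"]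
      by (simp add: algebra_simps)
    show "X r z + Y r z = n * (r powr (n - 1) * (?f r z * ?gr r z))
        + r powr n * (?fr r z * ?gr r z + ?f r z * ?grr r z)
        + r powr n * (?fz r z * ?gz r z + ?f r z * ?gzz r z)" for r z
      unfolding X_def Y_def by (simp add: algebra_simps)
    show "rapidly_decreasing (\<lambda>r z. ?f r z * ?gr r z)" "rapidly_decreasing (\<lambda>r z. ?f r z * ?gz r z)"
      by (intro rapidly_decreasing_mult D)+
  qed (use n in auto)
  moreover have "hp_integral X = hp_integral (\<lambda>r z. r powr n * F (t, r, z) * lap_n_pd n G t r z)"
    by (rule hp_integral_cong) (simp add: X_def lap_n_pd_def powr_diff_one algebra_simps)
  moreover have "hp_integral Y = hp_integral (\<lambda>r z. r powr n * (pd er F (t, r, z) * pd er G (t, r, z)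
                                          + pd ez F (t, r, z) * pd ez G (t, r, z)))"
    by (rule hp_integral_cong) (simp add: Y_def algebra_simps)
  ultimately show ?thesis using hp_integral_add[OF domX domY] by linarith
qed

lemma hp_dominated_advection:
  assumes F: "smooth_decaying T F" and G: "smooth_decaying T G" and P: "smooth_decaying T P"
    and t: "0 < t" "t < T" and n: "0 \<le> n"
  shows "hp_dominated (\<lambda>r z. r powr n * F (t, r, z) * advection n P G t r z)"
proof -
  note pd = smooth_decaying_pd[OF _ et_er_ez_Basis(2)] smooth_decaying_pd[OF _ et_er_ez_Basis(3)]
  note D = smooth_decaying_slice[OF _ t] F P pd[OF G] pd[OF P]
  have "hp_dominated (\<lambda>r z. (-1) * (r powr n * (r * (F (t, r, z) * (pd ez P (t, r, z) * pd er G (t, r, z)))))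
      + (n + 1) / 2 * (r powr n * (F (t, r, z) * (P (t, r, z) * pd ez G (t, r, z))))
      + r powr n * (r * (F (t, r, z) * (pd er P (t, r, z) * pd ez G (t, r, z)))))"
    using n by (intro hp_dominated_add hp_dominated_cmult hp_dominated_powr_weight rapidly_decreasing_mult
        rapidly_decreasing_mult_radius D) auto
  then show ?thesis
    by (rule hp_dominated_cong[rotated]) (simp add: advection_def algebra_simps)
qed

text \<open>The weighted divergence of the velocity is -(n + 1)/2 r^n P_z, so advection is
  antisymmetric up to this term.\<close>
lemma hp_integral_advection_antisym:
  assumes F: "smooth_decaying T F" and G: "smooth_decaying T G" and P: "smooth_decaying T P"
    and t: "0 < t" "t < T" and n: "0 \<le> n"
  shows "hp_integral (\<lambda>r z. r powr n * F (t, r, z) * advection n P G t r z)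
       + hp_integral (\<lambda>r z. r powr n * G (t, r, z) * advection n P F t r z)
       = (n + 1) / 2 * hp_integral (\<lambda>r z. r powr n * (F (t, r, z) * G (t, r, z) * pd ez P (t, r, z)))"
proof -
  let ?f = "\<lambda>r z. F (t, r, z)" and ?fr = "\<lambda>r z. pd er F (t, r, z)" and ?fz = "\<lambda>r z. pd ez F (t, r, z)"
  let ?g = "\<lambda>r z. G (t, r, z)" and ?gr = "\<lambda>r z. pd er G (t, r, z)" and ?gz = "\<lambda>r z. pd ez G (t, r, z)"
  let ?p = "\<lambda>r z. P (t, r, z)" and ?pr = "\<lambda>r z. pd er P (t, r, z)" and ?pz = "\<lambda>r z. pd ez P (t, r, z)"
  let ?prz = "\<lambda>r z. pd er (pd ez P) (t, r, z)"
  note pd = smooth_decaying_pd[OF _ et_er_ez_Basis(2)] smooth_decaying_pd[OF _ et_er_ez_Basis(3)]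
  note D = smooth_decaying_slice[OF _ t] F G P pd[OF F] pd[OF G] pd[OF P] pd(1)[OF pd(2)[OF P]]
  note dom = hp_dominated_add hp_dominated_cmult hp_dominated_powr_weight rapidly_decreasing_mult
    rapidly_decreasing_add rapidly_decreasing_cmult rapidly_decreasing_mult_radius D
  note deriv = smooth_decaying_has_derivative[OF _ t]
  have comm: "pd ez (pd er P) (t, r, z) = ?prz r z" for r z
    using smooth_decaying_pd_commute[OF P et_er_ez_Basis(2,3), of "(t, r, z)"] t by simp
  define I where "I r z = r powr n * (?f r z * ?g r z * ?pz r z)" for r z
  have domFG: "hp_dominated (\<lambda>r z. r powr n * F (t, r, z) * advection n P G t r z)"
    and domGF: "hp_dominated (\<lambda>r z. r powr n * G (t, r, z) * advection n P F t r z)"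
    using hp_dominated_advection[OF F G P t n] hp_dominated_advection[OF G F P t n] .
  have domI: "hp_dominated I" unfolding I_def using n by (intro dom) auto
  have "hp_integral (\<lambda>r z. r powr n * ?f r z * advection n P G t r z
      + r powr n * ?g r z * advection n P F t r z + (- (n + 1) / 2) * I r z) = 0"
  proof (rule hp_integral_divergence_eq_0[where a="\<lambda>r z. (-1) * (?f r z * (?g r z * ?pz r z))" and pa="n + 1"
        and b="\<lambda>r z. ((n + 1) / 2 * ?p r z + r * ?pr r z) * (?f r z * ?g r z)" and pb=n])
    show "rapidly_decreasing (\<lambda>r z. (-1) * (?f r z * (?g r z * ?pz r z)))"
      by (intro dom)
    show "rapidly_decreasing (\<lambda>r z. ((n + 1) / 2 * ?p r z + r * ?pr r z) * (?f r z * ?g r z))"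
      by (intro dom)
    show "hp_dominated (\<lambda>r z. (n + 1) * (r powr n * ((-1) * (?f r z * (?g r z * ?pz r z))))
        + r powr (n + 1) * ((-1) * (?fr r z * (?g r z * ?pz r z) + ?f r z * (?gr r z * ?pz r z + ?g r z * ?prz r z))))"
      using n by (intro dom) auto
    show "hp_dominated (\<lambda>r z. r powr n * (((n + 1) / 2 * ?pz r z + r * ?prz r z) * (?f r z * ?g r z)
        + ((n + 1) / 2 * ?p r z + r * ?pr r z) * (?fz r z * ?g r z + ?f r z * ?gz r z)))"
      using n by (intro dom) auto
    show "((\<lambda>s. s powr (n + 1) * ((-1) * (?f s z * (?g s z * ?pz s z)))) has_real_derivative
        (n + 1) * (r powr n * ((-1) * (?f r z * (?g r z * ?pz r z))))
        + r powr (n + 1) * ((-1) * (?fr r z * (?g r z * ?pz r z) + ?f r z * (?gr r z * ?pz r z + ?g r z * ?prz r z))))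
        (at r)" if "0 < r" for r z
      using DERIV_mult[OF has_real_derivative_powr[OF that, of "n + 1"]
          DERIV_cmult[OF DERIV_mult[OF deriv(2)[OF F, of z r] DERIV_mult[OF deriv(2)[OF G, of z r]
                deriv(2)[OF pd(2)[OF P], of z r]]], of "-1"]]
      by (simp add: algebra_simps)
    show "((\<lambda>s. r powr n * (((n + 1) / 2 * ?p r s + r * ?pr r s) * (?f r s * ?g r s))) has_real_derivative
        r powr n * (((n + 1) / 2 * ?pz r z + r * ?prz r z) * (?f r z * ?g r z)
        + ((n + 1) / 2 * ?p r z + r * ?pr r z) * (?fz r z * ?g r z + ?f r z * ?gz r z))) (at z)" for r z
      using DERIV_cmult[OF DERIV_mult[OF DERIV_add[OF DERIV_cmult[OF deriv(3)[OF P, of r z]]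
            DERIV_cmult[OF deriv(3)[OF pd(1)[OF P], of r z]]]
            DERIV_mult[OF deriv(3)[OF F, of r z] deriv(3)[OF G, of r z]]],
          of "r powr n" "(n + 1) / 2" r]
      by (simp add: comm algebra_simps)
    show "r powr n * ?f r z * advection n P G t r z + r powr n * ?g r z * advection n P F t r z
        + (- (n + 1) / 2) * I r z
      = (n + 1) * (r powr n * ((-1) * (?f r z * (?g r z * ?pz r z))))
        + r powr (n + 1) * ((-1) * (?fr r z * (?g r z * ?pz r z) + ?f r z * (?gr r z * ?pz r z + ?g r z * ?prz r z)))
        + r powr n * (((n + 1) / 2 * ?pz r z + r * ?prz r z) * (?f r z * ?g r z)
        + ((n + 1) / 2 * ?p r z + r * ?pr r z) * (?fz r z * ?g r z + ?f r z * ?gz r z))"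
      if "0 < r" for r z
      unfolding advection_def I_def powr_add_one[OF that] by (simp add: field_simps)
  qed (use n in auto)
  moreover have "hp_integral (\<lambda>r z. r powr n * ?f r z * advection n P G t r z
      + r powr n * ?g r z * advection n P F t r z + (- (n + 1) / 2) * I r z)
    = hp_integral (\<lambda>r z. r powr n * ?f r z * advection n P G t r z)
      + hp_integral (\<lambda>r z. r powr n * ?g r z * advection n P F t r z) - (n + 1) / 2 * hp_integral I"
    unfolding hp_integral_add[OF hp_dominated_add[OF domFG domGF] hp_dominated_cmult[OF domI]]
      hp_integral_add[OF domFG domGF] hp_integral_cmult
    by (simp add: field_simps)
  ultimately show ?thesis by (simp add: I_def[abs_def])
qed

lemma hp_integral_by_parts_z:
  assumes F: "smooth_decaying T F" and P: "smooth_decaying T P" and t: "0 < t" "t < T" and n: "0 \<le> n"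
  shows "hp_integral (\<lambda>r z. r powr n * P (t, r, z) * (2 * F (t, r, z) * pd ez F (t, r, z)))
       = - hp_integral (\<lambda>r z. r powr n * (F (t, r, z) * F (t, r, z) * pd ez P (t, r, z)))"
proof -
  let ?f = "\<lambda>r z. F (t, r, z)" and ?fz = "\<lambda>r z. pd ez F (t, r, z)"
  let ?p = "\<lambda>r z. P (t, r, z)" and ?pz = "\<lambda>r z. pd ez P (t, r, z)"
  note D = smooth_decaying_slice[OF _ t] F P
    smooth_decaying_pd[OF F et_er_ez_Basis(3)] smooth_decaying_pd[OF P et_er_ez_Basis(3)]
  note dom = hp_dominated_add hp_dominated_cmult hp_dominated_powr_weight rapidly_decreasing_mult
    rapidly_decreasing_add D
  note deriv = smooth_decaying_has_derivative(3)[OF _ t]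
  define X where "X r z = 2 * (r powr n * (?p r z * (?f r z * ?fz r z)))" for r z
  define Y where "Y r z = r powr n * (?f r z * ?f r z * ?pz r z)" for r z
  have domX: "hp_dominated X" unfolding X_def using n by (intro dom) auto
  have domY: "hp_dominated Y" unfolding Y_def using n by (intro dom) auto
  have "hp_integral (\<lambda>r z. X r z + Y r z) = 0"
  proof (rule hp_integral_vertical_flux_eq_0[where b="\<lambda>r z. ?p r z * (?f r z * ?f r z)" and p=n])
    show "rapidly_decreasing (\<lambda>r z. ?p r z * (?f r z * ?f r z))" by (intro dom)
    show "hp_dominated (\<lambda>r z. X r z + Y r z)" using domX domY by (rule hp_dominated_add)
    show "((\<lambda>s. r powr n * (?p r s * (?f r s * ?f r s))) has_real_derivative X r z + Y r z) (at z)"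
      for r z
      using DERIV_cmult[OF DERIV_mult[OF deriv[OF P, of r z] DERIV_mult[OF deriv[OF F, of r z] deriv[OF F, of r z]]],
          of "r powr n"]
      by (simp add: X_def Y_def algebra_simps)
  qed (use n in auto)
  moreover have "hp_integral X = hp_integral (\<lambda>r z. r powr n * P (t, r, z) * (2 * F (t, r, z) * pd ez F (t, r, z)))"
    by (rule hp_integral_cong) (simp add: X_def algebra_simps)
  ultimately show ?thesis using hp_integral_add[OF domX domY] by (simp add: Y_def[abs_def])
qed

lemma pd_et_stream_relation:
  assumes P: "smooth_decaying T P" and W: "smooth_decaying T W" and t: "0 < t" "t < T" and r: "0 < r"
    and stream: "\<And>\<tau>. 0 < \<tau> \<Longrightarrow> \<tau> < T \<Longrightarrow> W (\<tau>, r, z) = - lap_n_pd n P \<tau> r z"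
  shows "pd et W (t, r, z) = - lap_n_pd n (pd et P) t r z"
proof -
  note pd = smooth_decaying_pd[OF _ et_er_ez_Basis(2)] smooth_decaying_pd[OF _ et_er_ez_Basis(3)]
  note deriv = smooth_decaying_has_derivative(1)[OF _ t]
  note comm = smooth_decaying_pd_commute[OF _ _ et_er_ez_Basis(1)]
  have x: "(t, r, z) \<in> slab T" using t by simp
  have "((\<lambda>s. - lap_n_pd n P s r z) has_real_derivative
      - (pd et (pd er (pd er P)) (t, r, z) + n / r * pd et (pd er P) (t, r, z) + pd et (pd ez (pd ez P)) (t, r, z)))
      (at t)"
    unfolding lap_n_pd_def
    by (intro DERIV_minus DERIV_add DERIV_cmult deriv pd P pd[OF pd(1)[OF P]] pd[OF pd(2)[OF P]])
  then have "((\<lambda>s. W (s, r, z)) has_real_derivative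
      - (pd et (pd er (pd er P)) (t, r, z) + n / r * pd et (pd er P) (t, r, z) + pd et (pd ez (pd ez P)) (t, r, z)))
      (at t)"
    by (rule has_field_derivative_transform_within_open[where S="{0<..<T}"]) (use t stream in auto)
  then have "pd et W (t, r, z) = - (pd et (pd er (pd er P)) (t, r, z) + n / r * pd et (pd er P) (t, r, z)
      + pd et (pd ez (pd ez P)) (t, r, z))"
    using DERIV_unique[OF deriv[OF W]] by blast
  moreover have "pd et (pd er (pd er P)) (t, r, z) = pd er (pd er (pd et P)) (t, r, z)"
    using comm[OF pd(1)[OF P] et_er_ez_Basis(2) x]
      pd_cong_slab[OF comm[OF P et_er_ez_Basis(2)] x] by simp
  moreover have "pd et (pd ez (pd ez P)) (t, r, z) = pd ez (pd ez (pd et P)) (t, r, z)"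
    using comm[OF pd(2)[OF P] et_er_ez_Basis(3) x]
      pd_cong_slab[OF comm[OF P et_er_ez_Basis(3)] x] by simp
  ultimately show ?thesis using comm[OF P et_er_ez_Basis(2) x] by (simp add: lap_n_pd_def)
qed

section \<open>The energy identity\<close>

lemma has_real_derivative_weighted_hp_integral:
  assumes t0: "0 < t0" "t0 < T" and n: "0 \<le> n"
    and g: "\<And>\<tau>. 0 < \<tau> \<Longrightarrow> \<tau> < T \<Longrightarrow> rapidly_decreasing (g \<tau>)"
    and g': "rapidly_decreasing (g' t0)"
    and deriv: "\<And>\<tau> r z. 0 < \<tau> \<Longrightarrow> \<tau> < T \<Longrightarrow> ((\<lambda>s. g s r z) has_real_derivative g' \<tau> r z) (at \<tau>)"
    and uniform: "\<And>a b. 0 < a \<Longrightarrow> b < T \<Longrightarrow> decay_bounded {a..b} g'"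
  shows "((\<lambda>\<tau>. hp_integral (\<lambda>r z. r powr n * g \<tau> r z)) has_real_derivative
           hp_integral (\<lambda>r z. r powr n * g' t0 r z)) (at t0)"
proof -
  define a where "a = t0 / 2"
  define b where "b = (t0 + T) / 2"
  have ab: "0 < a" "a < t0" "t0 < b" "b < T" using t0 by (auto simp: a_def b_def)
  obtain C where C: "\<forall>\<tau>\<in>{a..b}. \<forall>r>0. \<forall>z. \<bar>r powr n * g' \<tau> r z\<bar> \<le> C * cauchy_weight r z"
    using decay_bounded_powr_weight[OF uniform[OF ab(1,4)] n] by blast
  show ?thesis
  proof (rule has_real_derivative_hp_integral[OF ab(2,3)])
    show "hp_dominated (\<lambda>r z. r powr n * g \<tau> r z)" if "a < \<tau>" "\<tau> < b" for \<tau>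
      using that ab by (intro hp_dominated_powr_weight g n) auto
    show "((\<lambda>s. r powr n * g s r z) has_real_derivative r powr n * g' \<tau> r z) (at \<tau>)"
      if "a < \<tau>" "\<tau> < b" for \<tau> r z
      using that ab by (intro DERIV_cmult deriv) auto
    show "hp_dominated (\<lambda>r z. r powr n * g' t0 r z)" by (rule hp_dominated_powr_weight[OF g' n])
    show "\<bar>r powr n * g' \<tau> r z\<bar> \<le> C * cauchy_weight r z" if "a < \<tau>" "\<tau> < b" "0 < r" for \<tau> r z
      using C that by auto
  qed
qed

lemma has_real_derivative_energy:
  assumes U: "smooth_decaying T U" and P: "smooth_decaying T P" and t0: "0 < t0" "t0 < T"
    and n: "0 \<le> n"
  shows "((\<lambda>\<tau>. hp_integral (\<lambda>r z. r powr n * ((U (\<tau>, r, z))\<^sup>2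
             + c * ((pd er P (\<tau>, r, z))\<^sup>2 + (pd ez P (\<tau>, r, z))\<^sup>2))))
         has_real_derivative hp_integral (\<lambda>r z. r powr n * (2 * U (t0, r, z) * pd et U (t0, r, z)
             + c * (2 * pd er P (t0, r, z) * pd et (pd er P) (t0, r, z)
                    + 2 * pd ez P (t0, r, z) * pd et (pd ez P) (t0, r, z))))) (at t0)"
proof (rule has_real_derivative_weighted_hp_integral[OF t0 n])
  note pd = smooth_decaying_pd[OF _ et_er_ez_Basis(1)] smooth_decaying_pd[OF _ et_er_ez_Basis(2)]
    smooth_decaying_pd[OF _ et_er_ez_Basis(3)]
  note fields = U P pd[OF U] pd[OF P] pd(1)[OF pd(2)[OF P]] pd(1)[OF pd(3)[OF P]]
  show "rapidly_decreasing (\<lambda>r z. (U (\<tau>, r, z))\<^sup>2 + c * ((pd er P (\<tau>, r, z))\<^sup>2 + (pd ez P (\<tau>, r, z))\<^sup>2))"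
    if "0 < \<tau>" "\<tau> < T" for \<tau>
    unfolding power2_eq_square
    by (intro rapidly_decreasing_add rapidly_decreasing_cmult rapidly_decreasing_mult
        smooth_decaying_slice[OF _ that] fields)
  show "rapidly_decreasing (\<lambda>r z. 2 * U (t0, r, z) * pd et U (t0, r, z)
      + c * (2 * pd er P (t0, r, z) * pd et (pd er P) (t0, r, z)
             + 2 * pd ez P (t0, r, z) * pd et (pd ez P) (t0, r, z)))"
    unfolding mult.assoc
    by (intro rapidly_decreasing_add rapidly_decreasing_cmult rapidly_decreasing_mult
        smooth_decaying_slice[OF _ t0] fields)
  show "decay_bounded {a..b} (\<lambda>\<tau> r z. 2 * U (\<tau>, r, z) * pd et U (\<tau>, r, z)
      + c * (2 * pd er P (\<tau>, r, z) * pd et (pd er P) (\<tau>, r, z)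
             + 2 * pd ez P (\<tau>, r, z) * pd et (pd ez P) (\<tau>, r, z)))"
    if "0 < a" "b < T" for a b
    unfolding mult.assoc
    by (intro decay_bounded_add decay_bounded_cmult decay_bounded_mult
        smooth_decaying_decay_bounded[OF _ that] fields)
  show "((\<lambda>s. (U (s, r, z))\<^sup>2 + c * ((pd er P (s, r, z))\<^sup>2 + (pd ez P (s, r, z))\<^sup>2)) has_real_derivative
      2 * U (\<tau>, r, z) * pd et U (\<tau>, r, z) + c * (2 * pd er P (\<tau>, r, z) * pd et (pd er P) (\<tau>, r, z)
        + 2 * pd ez P (\<tau>, r, z) * pd et (pd ez P) (\<tau>, r, z))) (at \<tau>)"
    if "0 < \<tau>" "\<tau> < T" for \<tau> r z
    using smooth_decaying_has_derivative(1)[OF _ that, of _ r z] fields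
    by (auto intro!: derivative_eq_intros simp: algebra_simps)
qed

lemma hp_integral_u_energy_balance:
  assumes U: "smooth_decaying T U" and P: "smooth_decaying T P" and t: "0 < t" "t < T" and n: "1 \<le> n"
    and eq_u: "\<And>r z. 0 < r \<Longrightarrow> pd et U (t, r, z)
      = - advection n P U t r z + 2 * U (t, r, z) * pd ez P (t, r, z) + \<nu> * lap_n_pd n U t r z"
  shows "hp_integral (\<lambda>r z. r powr n * (U (t, r, z) * pd et U (t, r, z)))
       = (7 - n) / 4 * hp_integral (\<lambda>r z. r powr n * (U (t, r, z) * U (t, r, z) * pd ez P (t, r, z)))
         - \<nu> * hp_integral (\<lambda>r z. r powr n * ((pd er U (t, r, z))\<^sup>2 + (pd ez U (t, r, z))\<^sup>2))"
proof -
  define A where "A r z = r powr n * U (t, r, z) * advection n P U t r z" for r z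
  define K where "K r z = r powr n * (U (t, r, z) * U (t, r, z) * pd ez P (t, r, z))" for r z
  define L where "L r z = r powr n * U (t, r, z) * lap_n_pd n U t r z" for r z
  have domA: "hp_dominated A" unfolding A_def using n by (intro hp_dominated_advection[OF U U P t]) simp
  have domL: "hp_dominated L" unfolding L_def by (rule hp_dominated_lap_n_pd[OF U U t n])
  have domK: "hp_dominated K" unfolding K_def using n
    by (intro hp_dominated_powr_weight rapidly_decreasing_mult smooth_decaying_slice[OF _ t] U
        smooth_decaying_pd[OF P et_er_ez_Basis(3)]) auto
  have collect: "x = - ((n + 1) / 4 * k) + 2 * k + \<nu> * - j \<Longrightarrow> x = (7 - n) / 4 * k - \<nu> * j"
    for x k j :: real
    by (simp add: field_simps)
  have "hp_integral (\<lambda>r z. r powr n * (U (t, r, z) * pd et U (t, r, z)))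
      = hp_integral (\<lambda>r z. (-1) * A r z + 2 * K r z + \<nu> * L r z)"
    by (rule hp_integral_cong) (simp add: A_def K_def L_def eq_u algebra_simps)
  also have "\<dots> = - hp_integral A + 2 * hp_integral K + \<nu> * hp_integral L"
    using hp_integral_linear3[OF domA domK domL, of "-1" 2 \<nu>] by simp
  also have "hp_integral A = (n + 1) / 4 * hp_integral K"
    using hp_integral_advection_antisym[OF U U P t] n by (simp add: A_def[abs_def] K_def[abs_def] ac_simps)
  also have "hp_integral L = - hp_integral (\<lambda>r z. r powr n * ((pd er U (t, r, z))\<^sup>2 + (pd ez U (t, r, z))\<^sup>2))"
    using hp_integral_green[OF U U t n] by (simp add: L_def[abs_def] power2_eq_square)
  finally show ?thesis unfolding K_def[abs_def] by (rule collect)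
qed

lemma hp_integral_advection_by_stream_eq_0:
  assumes P: "smooth_decaying T P" and W: "smooth_decaying T W" and t: "0 < t" "t < T" and n: "0 \<le> n"
  shows "hp_integral (\<lambda>r z. r powr n * P (t, r, z) * advection n P W t r z) = 0"
proof -
  have "hp_integral (\<lambda>r z. r powr n * W (t, r, z) * advection n P P t r z)
      = (n + 1) / 2 * hp_integral (\<lambda>r z. r powr n * (P (t, r, z) * W (t, r, z) * pd ez P (t, r, z)))"
    by (simp add: advection_def algebra_simps flip: hp_integral_cmult)
  then show ?thesis using hp_integral_advection_antisym[OF P W P t n] by simp
qed

lemma hp_integral_lap_n_stream:
  assumes P: "smooth_decaying T P" and W: "smooth_decaying T W" and t: "0 < t" "t < T" and n: "1 \<le> n"
    and stream: "\<And>\<tau> r z. 0 < \<tau> \<Longrightarrow> \<tau> < T \<Longrightarrow> 0 < r \<Longrightarrow> W (\<tau>, r, z) = - lap_n_pd n P \<tau> r z"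
  shows "hp_integral (\<lambda>r z. r powr n * P (t, r, z) * lap_n_pd n W t r z)
       = - hp_integral (\<lambda>r z. r powr n * (lap_n_pd n P t r z)\<^sup>2)"
proof -
  have "hp_integral (\<lambda>r z. r powr n * P (t, r, z) * lap_n_pd n W t r z)
      = hp_integral (\<lambda>r z. r powr n * W (t, r, z) * lap_n_pd n P t r z)"
    using hp_integral_green[OF P W t n] hp_integral_green[OF W P t n] by (simp add: algebra_simps)
  also have "\<dots> = hp_integral (\<lambda>r z. (-1) * (r powr n * (lap_n_pd n P t r z)\<^sup>2))"
    by (rule hp_integral_cong) (simp add: stream t power2_eq_square)
  finally show ?thesis by (simp add: hp_integral_minus)
qed

lemma hp_integral_psi_energy_balance:
  assumes U: "smooth_decaying T U" and P: "smooth_decaying T P" and W: "smooth_decaying T W"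
    and t: "0 < t" "t < T" and n: "1 \<le> n"
    and eq_w: "\<And>r z. 0 < r \<Longrightarrow> pd et W (t, r, z)
      = - advection n P W t r z + 2 * U (t, r, z) * pd ez U (t, r, z) + \<nu> * lap_n_pd n W t r z"
    and stream: "\<And>\<tau> r z. 0 < \<tau> \<Longrightarrow> \<tau> < T \<Longrightarrow> 0 < r \<Longrightarrow> W (\<tau>, r, z) = - lap_n_pd n P \<tau> r z"
  shows "hp_integral (\<lambda>r z. r powr n * (pd er P (t, r, z) * pd et (pd er P) (t, r, z)
                                       + pd ez P (t, r, z) * pd et (pd ez P) (t, r, z)))
       = - hp_integral (\<lambda>r z. r powr n * (U (t, r, z) * U (t, r, z) * pd ez P (t, r, z)))
         - \<nu> * hp_integral (\<lambda>r z. r powr n * (lap_n_pd n P t r z)\<^sup>2)"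
proof -
  have n0: "0 \<le> n" using n by simp
  have Pt: "smooth_decaying T (pd et P)" by (rule smooth_decaying_pd[OF P et_er_ez_Basis(1)])
  define A where "A r z = r powr n * P (t, r, z) * advection n P W t r z" for r z
  define B where "B r z = r powr n * P (t, r, z) * (2 * U (t, r, z) * pd ez U (t, r, z))" for r z
  define L where "L r z = r powr n * P (t, r, z) * lap_n_pd n W t r z" for r z
  have domA: "hp_dominated A" unfolding A_def by (rule hp_dominated_advection[OF P W P t n0])
  have domL: "hp_dominated L" unfolding L_def by (rule hp_dominated_lap_n_pd[OF P W t n])
  have domB: "hp_dominated B"
  proof -
    have "hp_dominated (\<lambda>r z. 2 * (r powr n * (P (t, r, z) * (U (t, r, z) * pd ez U (t, r, z)))))"
      using n by (intro hp_dominated_cmult hp_dominated_powr_weight rapidly_decreasing_mult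
          smooth_decaying_slice[OF _ t] P U smooth_decaying_pd[OF U et_er_ez_Basis(3)]) auto
    then show ?thesis by (rule hp_dominated_cong[rotated]) (simp add: B_def algebra_simps)
  qed
  \<comment> \<open>Two integrations by parts move the time derivative from \<nabla>P onto W = -\<Delta>_n P.\<close>
  have "hp_integral (\<lambda>r z. r powr n * (pd er P (t, r, z) * pd et (pd er P) (t, r, z)
                                       + pd ez P (t, r, z) * pd et (pd ez P) (t, r, z)))
      = - hp_integral (\<lambda>r z. r powr n * P (t, r, z) * lap_n_pd n (pd et P) t r z)"
    using hp_integral_green[OF P Pt t n]
      smooth_decaying_pd_commute[OF P et_er_ez_Basis(2,1)] smooth_decaying_pd_commute[OF P et_er_ez_Basis(3,1)]
    by (simp add: t)
  also have "\<dots> = hp_integral (\<lambda>r z. r powr n * (P (t, r, z) * pd et W (t, r, z)))"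
  proof -
    have "pd et W (t, r, z) = - lap_n_pd n (pd et P) t r z" if "0 < r" for r z
      using pd_et_stream_relation[OF P W t that] stream that by blast
    then have "hp_integral (\<lambda>r z. r powr n * (P (t, r, z) * pd et W (t, r, z)))
        = hp_integral (\<lambda>r z. (-1) * (r powr n * P (t, r, z) * lap_n_pd n (pd et P) t r z))"
      by (intro hp_integral_cong) simp
    then show ?thesis by (simp add: hp_integral_minus)
  qed
  also have "\<dots> = hp_integral (\<lambda>r z. (-1) * A r z + 1 * B r z + \<nu> * L r z)"
    by (rule hp_integral_cong) (simp add: A_def B_def L_def eq_w algebra_simps)
  also have "\<dots> = - hp_integral A + hp_integral B + \<nu> * hp_integral L"
    using hp_integral_linear3[OF domA domB domL, of "-1" 1 \<nu>] by simp
  also have "hp_integral A = 0"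
    unfolding A_def[abs_def] by (rule hp_integral_advection_by_stream_eq_0[OF P W t n0])
  also have "hp_integral B = - hp_integral (\<lambda>r z. r powr n * (U (t, r, z) * U (t, r, z) * pd ez P (t, r, z)))"
    using hp_integral_by_parts_z[OF U P t n0] by (simp add: B_def[abs_def])
  also have "hp_integral L = - hp_integral (\<lambda>r z. r powr n * (lap_n_pd n P t r z)\<^sup>2)"
    unfolding L_def[abs_def] by (rule hp_integral_lap_n_stream[OF P W t n stream])
  finally show ?thesis by simp
qed

lemma has_real_derivative_energy_solution:
  assumes U: "smooth_decaying T U" and P: "smooth_decaying T P" and W: "smooth_decaying T W"
    and t: "0 < t" "t < T" and n: "1 \<le> n"
    and eq_u: "\<And>r z. 0 < r \<Longrightarrow> pd et U (t, r, z)
      = - advection n P U t r z + 2 * U (t, r, z) * pd ez P (t, r, z) + \<nu>\<^sub>1 * lap_n_pd n U t r z"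
    and eq_w: "\<And>r z. 0 < r \<Longrightarrow> pd et W (t, r, z)
      = - advection n P W t r z + 2 * U (t, r, z) * pd ez U (t, r, z) + \<nu>\<^sub>2 * lap_n_pd n W t r z"
    and stream: "\<And>\<tau> r z. 0 < \<tau> \<Longrightarrow> \<tau> < T \<Longrightarrow> 0 < r \<Longrightarrow> W (\<tau>, r, z) = - lap_n_pd n P \<tau> r z"
  shows "((\<lambda>\<tau>. hp_integral (\<lambda>r z. r powr n * ((U (\<tau>, r, z))\<^sup>2
             + (7 - n) / 4 * ((pd er P (\<tau>, r, z))\<^sup>2 + (pd ez P (\<tau>, r, z))\<^sup>2))))
         has_real_derivative
           2 * (- \<nu>\<^sub>1 * hp_integral (\<lambda>r z. r powr n * ((pd er U (t, r, z))\<^sup>2 + (pd ez U (t, r, z))\<^sup>2))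
                - \<nu>\<^sub>2 * ((7 - n) / 4) * hp_integral (\<lambda>r z. r powr n * (lap_n_pd n P t r z)\<^sup>2))) (at t)"
proof -
  define c where "c = (7 - n) / 4"
  define Eu where "Eu r z = r powr n * (U (t, r, z) * pd et U (t, r, z))" for r z
  define Ep where "Ep r z = r powr n * (pd er P (t, r, z) * pd et (pd er P) (t, r, z)
                                       + pd ez P (t, r, z) * pd et (pd ez P) (t, r, z))" for r z
  note pd = smooth_decaying_pd[OF _ et_er_ez_Basis(1)] smooth_decaying_pd[OF _ et_er_ez_Basis(2)]
    smooth_decaying_pd[OF _ et_er_ez_Basis(3)]
  note dom = hp_dominated_powr_weight rapidly_decreasing_mult rapidly_decreasing_add
    smooth_decaying_slice[OF _ t] U P pd[OF U] pd[OF P] pd(1)[OF pd(2)[OF P]] pd(1)[OF pd(3)[OF P]]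
  have domEu: "hp_dominated Eu" unfolding Eu_def using n by (intro dom) auto
  have domEp: "hp_dominated Ep" unfolding Ep_def using n by (intro dom) auto
  have "hp_integral (\<lambda>r z. r powr n * (2 * U (t, r, z) * pd et U (t, r, z)
          + c * (2 * pd er P (t, r, z) * pd et (pd er P) (t, r, z)
                 + 2 * pd ez P (t, r, z) * pd et (pd ez P) (t, r, z))))
      = hp_integral (\<lambda>r z. 2 * Eu r z + (2 * c) * Ep r z)"
    by (rule hp_integral_cong) (simp add: Eu_def Ep_def algebra_simps)
  also have "\<dots> = 2 * hp_integral Eu + (2 * c) * hp_integral Ep"
    by (simp add: hp_integral_add hp_dominated_cmult domEu domEp hp_integral_cmult)
  also have "\<dots> = 2 * (- \<nu>\<^sub>1 * hp_integral (\<lambda>r z. r powr n * ((pd er U (t, r, z))\<^sup>2 + (pd ez U (t, r, z))\<^sup>2))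
                - \<nu>\<^sub>2 * c * hp_integral (\<lambda>r z. r powr n * (lap_n_pd n P t r z)\<^sup>2))"
  proof -
    have combine: "2 * (c * k - \<nu>\<^sub>1 * j\<^sub>1) + (2 * c) * (- k - \<nu>\<^sub>2 * j\<^sub>2)
        = 2 * (- \<nu>\<^sub>1 * j\<^sub>1 - \<nu>\<^sub>2 * c * j\<^sub>2)" for k j\<^sub>1 j\<^sub>2 :: real
      by (simp add: algebra_simps)
    have "hp_integral Eu = c * hp_integral (\<lambda>r z. r powr n * (U (t, r, z) * U (t, r, z) * pd ez P (t, r, z)))
        - \<nu>\<^sub>1 * hp_integral (\<lambda>r z. r powr n * ((pd er U (t, r, z))\<^sup>2 + (pd ez U (t, r, z))\<^sup>2))"
      unfolding Eu_def[abs_def] c_def by (rule hp_integral_u_energy_balance[OF U P t n eq_u])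
    moreover have "hp_integral Ep = - hp_integral (\<lambda>r z. r powr n * (U (t, r, z) * U (t, r, z) * pd ez P (t, r, z)))
        - \<nu>\<^sub>2 * hp_integral (\<lambda>r z. r powr n * (lap_n_pd n P t r z)\<^sup>2)"
      unfolding Ep_def[abs_def] by (rule hp_integral_psi_energy_balance[OF U P W t n eq_w stream])
    ultimately show ?thesis by (simp only: combine)
  qed
  finally show ?thesis
    using has_real_derivative_energy[OF U P t, of n c] n by (simp add: c_def)
qed

lemma gen_energy_has_real_derivative:
  fixes u1 \<omega>1 \<psi>1 ur uz :: "real \<Rightarrow> real \<Rightarrow> real \<Rightarrow> real"
  assumes n: "1 \<le> n" and t: "0 < t" "t < T"
    and smooth: "\<forall>f\<in>{u1, \<omega>1, \<psi>1}. smooth_decaying T (uncurry3 f)"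
    and ur_def: "\<And>t r z. ur t r z = - r * dz \<psi>1 t r z"
    and uz_def: "\<And>t r z. uz t r z = (n + 1) / 2 * \<psi>1 t r z + r * dr \<psi>1 t r z"
    and eq_u: "\<And>t r z. 0 < t \<Longrightarrow> t < T \<Longrightarrow> 0 < r \<Longrightarrow>
        dt u1 t r z + ur t r z * dr u1 t r z + uz t r z * dz u1 t r z
          = 2 * u1 t r z * dz \<psi>1 t r z + \<nu>\<^sub>1 * lap_n n u1 t r z"
    and eq_w: "\<And>t r z. 0 < t \<Longrightarrow> t < T \<Longrightarrow> 0 < r \<Longrightarrow>
        dt \<omega>1 t r z + ur t r z * dr \<omega>1 t r z + uz t r z * dz \<omega>1 t r z
          = dz (\<lambda>t r z. (u1 t r z)\<^sup>2) t r z + \<nu>\<^sub>2 * lap_n n \<omega>1 t r z"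
    and eq_psi: "\<And>t r z. 0 < t \<Longrightarrow> t < T \<Longrightarrow> 0 < r \<Longrightarrow> - lap_n n \<psi>1 t r z = \<omega>1 t r z"
  shows "(gen_energy n u1 \<psi>1 has_real_derivative
           2 * (- \<nu>\<^sub>1 * hp_integral (\<lambda>r z. ((dr u1 t r z)\<^sup>2 + (dz u1 t r z)\<^sup>2) * r powr n)
                - \<nu>\<^sub>2 * ((7 - n) / 4) * hp_integral (\<lambda>r z. (lap_n n \<psi>1 t r z)\<^sup>2 * r powr n))) (at t)"
proof -
  have U: "smooth_decaying T (uncurry3 u1)" and P: "smooth_decaying T (uncurry3 \<psi>1)"
    and W: "smooth_decaying T (uncurry3 \<omega>1)" using smooth by auto
  note pd_form = dt_eq_pd dr_eq_pd dz_eq_pd lap_n_eq_lap_n_pd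
  have "dz (\<lambda>t r z. (u1 t r z)\<^sup>2) t r z = 2 * u1 t r z * pd ez (uncurry3 u1) (t, r, z)" for r z
    unfolding dz_def
    using DERIV_power[OF smooth_decaying_has_derivative(3)[OF U t, of r z], of 2]
    by (intro DERIV_imp_deriv) (simp add: algebra_simps)
  note sq = this[unfolded dz_eq_pd curry3_apply]
  have "gen_energy n u1 \<psi>1 = (\<lambda>\<tau>. hp_integral (\<lambda>r z. r powr n * ((uncurry3 u1 (\<tau>, r, z))\<^sup>2
      + (7 - n) / 4 * ((pd er (uncurry3 \<psi>1) (\<tau>, r, z))\<^sup>2 + (pd ez (uncurry3 \<psi>1) (\<tau>, r, z))\<^sup>2))))"
    by (simp add: fun_eq_iff gen_energy_def hp_integral_def pd_form mult.commute)
  moreover have "(\<lambda>r z. ((dr u1 t r z)\<^sup>2 + (dz u1 t r z)\<^sup>2) * r powr n)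
      = (\<lambda>r z. r powr n * ((pd er (uncurry3 u1) (t, r, z))\<^sup>2 + (pd ez (uncurry3 u1) (t, r, z))\<^sup>2))"
    "(\<lambda>r z. (lap_n n \<psi>1 t r z)\<^sup>2 * r powr n) = (\<lambda>r z. r powr n * (lap_n_pd n (uncurry3 \<psi>1) t r z)\<^sup>2)"
    by (simp_all add: fun_eq_iff pd_form mult.commute)
  moreover have "((\<lambda>\<tau>. hp_integral (\<lambda>r z. r powr n * ((uncurry3 u1 (\<tau>, r, z))\<^sup>2
      + (7 - n) / 4 * ((pd er (uncurry3 \<psi>1) (\<tau>, r, z))\<^sup>2 + (pd ez (uncurry3 \<psi>1) (\<tau>, r, z))\<^sup>2))))
      has_real_derivative 2 * (- \<nu>\<^sub>1 * hp_integral (\<lambda>r z. r powr n * ((pd er (uncurry3 u1) (t, r, z))\<^sup>2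
        + (pd ez (uncurry3 u1) (t, r, z))\<^sup>2))
        - \<nu>\<^sub>2 * ((7 - n) / 4) * hp_integral (\<lambda>r z. r powr n * (lap_n_pd n (uncurry3 \<psi>1) t r z)\<^sup>2))) (at t)"
  proof (rule has_real_derivative_energy_solution[OF U P W t n])
    show "pd et (uncurry3 u1) (t, r, z) = - advection n (uncurry3 \<psi>1) (uncurry3 u1) t r z
        + 2 * uncurry3 u1 (t, r, z) * pd ez (uncurry3 \<psi>1) (t, r, z) + \<nu>\<^sub>1 * lap_n_pd n (uncurry3 u1) t r z"
      if "0 < r" for r z
      using eq_u[OF t that, of z] by (simp add: pd_form ur_def uz_def advection_def algebra_simps)
    show "pd et (uncurry3 \<omega>1) (t, r, z) = - advection n (uncurry3 \<psi>1) (uncurry3 \<omega>1) t r z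
        + 2 * uncurry3 u1 (t, r, z) * pd ez (uncurry3 u1) (t, r, z) + \<nu>\<^sub>2 * lap_n_pd n (uncurry3 \<omega>1) t r z"
      if "0 < r" for r z
      using eq_w[OF t that, of z] by (simp add: pd_form sq ur_def uz_def advection_def algebra_simps)
    show "uncurry3 \<omega>1 (\<tau>, r, z) = - lap_n_pd n (uncurry3 \<psi>1) \<tau> r z" if "0 < \<tau>" "\<tau> < T" "0 < r" for \<tau> r z
      using eq_psi[OF that, of z] by (simp add: pd_form)
  qed
  ultimately show ?thesis by simp
qed

theorem mainTheorem4:
  fixes n m \<nu>1 \<nu>2 T :: real
    and u1 \<omega>1 \<psi>1 :: "real \<Rightarrow> real \<Rightarrow> real \<Rightarrow> real"
    and ur uz :: "real \<Rightarrow> real \<Rightarrow> real \<Rightarrow> real"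
  assumes n_ge: "2 \<le> n" and n_lt: "n < 7"
    and m_def: "m = (n + 3) / 2"
    and nu1: "0 \<le> \<nu>1" and nu2: "0 \<le> \<nu>2" and T_pos: "0 < T"
    and smooth: "\<forall>f\<in>{u1, \<omega>1, \<psi>1}.
                   smooth_on ({0<..<T} \<times> UNIV \<times> UNIV) (\<lambda>(t, r, z). f t r z)"
    and even: "\<forall>f\<in>{u1, \<omega>1, \<psi>1}. \<forall>t r z. f t (- r) z = f t r z"
    and decay: "\<forall>f\<in>{u1, \<omega>1, \<psi>1}. rapid_decay T (\<lambda>(t, r, z). f t r z)"
    and ur_def: "\<And>t r z. ur t r z = - r * dz \<psi>1 t r z"
    and uz_def: "\<And>t r z. uz t r z = (m - 1) * \<psi>1 t r z + r * dr \<psi>1 t r z"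
    and eq_u: "\<And>t r z. 0 < t \<Longrightarrow> t < T \<Longrightarrow> 0 < r \<Longrightarrow>
        dt u1 t r z + ur t r z * dr u1 t r z + uz t r z * dz u1 t r z
          = 2 * u1 t r z * dz \<psi>1 t r z + \<nu>1 * lap_n n u1 t r z"
    and eq_w: "\<And>t r z. 0 < t \<Longrightarrow> t < T \<Longrightarrow> 0 < r \<Longrightarrow>
        dt \<omega>1 t r z + ur t r z * dr \<omega>1 t r z + uz t r z * dz \<omega>1 t r z
          = dz (\<lambda>t r z. (u1 t r z)\<^sup>2) t r z + \<nu>2 * lap_n n \<omega>1 t r z"
    and eq_psi: "\<And>t r z. 0 < t \<Longrightarrow> t < T \<Longrightarrow> 0 < r \<Longrightarrow>
        - lap_n n \<psi>1 t r z = \<omega>1 t r z"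
  shows "(\<forall>t. 0 < t \<and> t < T \<longrightarrow>
            (gen_energy n u1 \<psi>1 has_real_derivative
               2 * (- \<nu>1 * (LINT z|lborel. (LINT r:{0<..}|lborel.
                               ((dr u1 t r z)\<^sup>2 + (dz u1 t r z)\<^sup>2) * r powr n))
                    - \<nu>2 * ((7 - n) / 4) * (LINT z|lborel. (LINT r:{0<..}|lborel.
                               (lap_n n \<psi>1 t r z)\<^sup>2 * r powr n)))) (at t))
       \<and> (\<forall>t. 0 < t \<and> t < T \<longrightarrow> 0 \<le> gen_energy n u1 \<psi>1 t)
       \<and> (\<forall>s t. 0 < s \<and> s \<le> t \<and> t < T \<longrightarrow> gen_energy n u1 \<psi>1 t \<le> gen_energy n u1 \<psi>1 s)
       \<and> (\<nu>1 = 0 \<and> \<nu>2 = 0 \<longrightarrow>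
            (\<forall>s t. 0 < s \<and> s < T \<and> 0 < t \<and> t < T \<longrightarrow> gen_energy n u1 \<psi>1 t = gen_energy n u1 \<psi>1 s))"
proof -
  have smooth': "\<forall>f\<in>{u1, \<omega>1, \<psi>1}. smooth_decaying T (uncurry3 f)"
    using smooth decay by (auto simp: smooth_decaying_def slab_def uncurry3_def)
  have uz': "\<And>t r z. uz t r z = (n + 1) / 2 * \<psi>1 t r z + r * dr \<psi>1 t r z"
    using uz_def m_def by (simp add: add_divide_distrib)
  note deriv = gen_energy_has_real_derivative[OF _ _ _ smooth' ur_def uz' eq_u eq_w eq_psi]
  have dissipation_nonpos: "2 * (- \<nu>1 * hp_integral (\<lambda>r z. ((dr u1 t r z)\<^sup>2 + (dz u1 t r z)\<^sup>2) * r powr n)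
      - \<nu>2 * ((7 - n) / 4) * hp_integral (\<lambda>r z. (lap_n n \<psi>1 t r z)\<^sup>2 * r powr n)) \<le> 0" for t
  proof -
    have "2 * (- a - b) \<le> 0" if "0 \<le> a" "0 \<le> b" for a b :: real using that by simp
    moreover have "0 \<le> \<nu>1 * hp_integral (\<lambda>r z. ((dr u1 t r z)\<^sup>2 + (dz u1 t r z)\<^sup>2) * r powr n)"
      "0 \<le> \<nu>2 * ((7 - n) / 4) * hp_integral (\<lambda>r z. (lap_n n \<psi>1 t r z)\<^sup>2 * r powr n)"
      using nu1 nu2 n_lt by (intro mult_nonneg_nonneg hp_integral_nonneg; simp)+
    ultimately show ?thesis unfolding mult_minus_left by blast
  qed
  show ?thesis
  proof (intro conjI allI impI)
    show "0 \<le> gen_energy n u1 \<psi>1 t" for t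
      using n_lt unfolding gen_energy_def
      by (intro hp_integral_nonneg[unfolded hp_integral_def]) simp
    show "gen_energy n u1 \<psi>1 t \<le> gen_energy n u1 \<psi>1 s" if "0 < s \<and> s \<le> t \<and> t < T" for s t
      using that n_ge dissipation_nonpos
      by (intro DERIV_nonpos_imp_nonincreasing[of s t]) (auto intro!: exI deriv)
    show "gen_energy n u1 \<psi>1 t = gen_energy n u1 \<psi>1 s"
      if "\<nu>1 = 0 \<and> \<nu>2 = 0" "0 < s \<and> s < T \<and> 0 < t \<and> t < T" for s t
      using that n_ge T_pos deriv
      by (intro DERIV_isconst3[where a=0 and b=T]) auto
  qed (use deriv[unfolded hp_integral_def] n_ge in simp)
qed

end
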